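(* Let $r\ge 2$ be a constant, $n\ge 2$, and $k\ge 2r$ a divisor of $n$. Let $g^k:\{0,1\}^k\to\mathbb{R}$ be $\mathrm{Fork}_{k,r}$ with the last $r$ bits of the argument complemented, i.e. $g^k(z_0\dots z_{k-1})=\mathrm{Fork}_{k,r}(z_0\dots z_{k-r-1}\bar z_{k-r}\dots\bar z_{k-1})$, so that $1^k$ is its unique optimum, where $\mathrm{Fork}_{k,r}(x)=k+1$ if $x=0^r1^{k-r}$, $k+2$ if $x=1^{k-r}0^r$, and $|x|_1$ otherwise. Define LeadingOnes with $k$-block Fork as $$F(x)=\sum_{i=0}^{n/k-1} g^k(x_{ik}\dots x_{ik+k-1})\cdot\prod_{j=0}^{ik-1}x_j,\quad x\in\{0,1\}^n.$$ Then the expected optimization time $E(T)$ of the (1+1) EA (mutation probability $1/n$) on $F$ satisfies $E(T)\in\Theta\!\left(\frac1k n^{2r+1}\right)$.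
   Context: The (1+1) EA with mutation probability $1/n$: start with $x$ uniform in $\{0,1\}^n$; each iteration create $y$ by flipping each bit of $x$ independently with probability $1/n$, set $x\gets y$ if $F(y)\ge F(x)$. Optimization time = number of iterations until the optimum is the current solution. Asymptotics are with respect to $n$. *)

theory Defs
  imports "HOL-Probability.Probability"
begin

text \<open>Bit strings of length n are boolean lists of length n (True = 1).\<close>

fun mutate :: "real \<Rightarrow> bool list \<Rightarrow> bool list pmf" where
  "mutate p [] = return_pmf []"
| "mutate p (b # bs) =
     bind_pmf (bernoulli_pmf p) (\<lambda>f.
     bind_pmf (mutate p bs) (\<lambda>rest.
     return_pmf ((if f then \<not> b else b) # rest)))"

definition ones :: "bool list \<Rightarrow> nat" where
  "ones x = length (filter id x)"

text \<open>One iteration of the (1+1) EA with mutation probability 1/n, stopped once the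
  optimum opt is the current solution (this does not change the first hitting time).\<close>
definition ea_step :: "(bool list \<Rightarrow> real) \<Rightarrow> nat \<Rightarrow> bool list \<Rightarrow> bool list \<Rightarrow> bool list pmf" where
  "ea_step F n opt x =
     (if x = opt then return_pmf x
      else bind_pmf (mutate (1 / real n) x)
             (\<lambda>y. return_pmf (if F y \<ge> F x then y else x)))"

definition ea_state :: "(bool list \<Rightarrow> real) \<Rightarrow> nat \<Rightarrow> bool list \<Rightarrow> nat \<Rightarrow> bool list pmf" where
  "ea_state F n opt t =
     ((\<lambda>p. bind_pmf p (ea_step F n opt)) ^^ t) (pmf_of_set {x. length x = n})"

text \<open>Expected optimization time E(T) = sum over t of P(T > t), where T > t iff the
  (stopped) process is not at the optimum after t iterations.\<close>
definition ea_expected_time :: "(bool list \<Rightarrow> real) \<Rightarrow> nat \<Rightarrow> bool list \<Rightarrow> ennreal" where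
  "ea_expected_time F n opt =
     (\<Sum>t. ennreal (measure_pmf.prob (ea_state F n opt t) {x. x \<noteq> opt}))"

definition fork :: "nat \<Rightarrow> nat \<Rightarrow> bool list \<Rightarrow> real" where
  "fork k r x =
     (if x = replicate r False @ replicate (k - r) True then real k + 1
      else if x = replicate (k - r) True @ replicate r False then real k + 2
      else real (ones x))"

definition gblock :: "nat \<Rightarrow> nat \<Rightarrow> bool list \<Rightarrow> real" where
  "gblock k r z = fork k r (take (k - r) z @ map Not (drop (k - r) z))"

definition lo_fork :: "nat \<Rightarrow> nat \<Rightarrow> nat \<Rightarrow> bool list \<Rightarrow> real" where
  "lo_fork n k r x =
     (\<Sum>i<n div k. gblock k r (take k (drop (i * k) x)) *
                   (\<Prod>j<i * k. if x ! j then 1 else 0))"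

end

theory Submission
  imports Defs
begin

text \<open>The fitness of x is determined by the number of leading all-one blocks and the value of g on
  the first block that is not all ones, so the blocks are optimised one after another.

  Upper bound: on a non-optimal block a single bit flip increases g, except at the local optimum
  1^(k-r) 0^r of g, which needs r flips, and at the trap 0^r 1^(k-2r) 0^r, which needs 2r flips.
  A potential charging about n, n^r and n^(2r) steps for these levels, summed over the n/k
  blocks, decreases by at least one in expectation in every step.

  Lower bound: complementing and swapping the first and last r bits of block m exchanges the trap
  with 1^k, preserves g elsewhere and commutes with mutation.  Hence, for the process stopped as
  soon as block m becomes the trap or 1^k, both outcomes are equally likely, and block m is
  trapped with probability at least 1/4 by the time the optimum is likely to have been found.
  A trap is left only by flipping 2r specific bits, so the process stays there for about n^(2r)
  steps; the n/k blocks contribute disjoint occupation times.\<close>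

section \<open>Iterated Markov kernels\<close>

definition markov_iter :: "('a \<Rightarrow> 'a pmf) \<Rightarrow> nat \<Rightarrow> 'a pmf \<Rightarrow> 'a pmf" where
  "markov_iter K t \<mu> = ((\<lambda>p. bind_pmf p K) ^^ t) \<mu>"

definition stopped :: "'a set \<Rightarrow> ('a \<Rightarrow> 'a pmf) \<Rightarrow> 'a \<Rightarrow> 'a pmf" where
  "stopped S K x = (if x \<in> S then return_pmf x else K x)"

lemma markov_iter_0 [simp]: "markov_iter K 0 \<mu> = \<mu>"
  by (simp add: markov_iter_def)

lemma markov_iter_Suc: "markov_iter K (Suc t) \<mu> = bind_pmf (markov_iter K t \<mu>) K"
  by (simp add: markov_iter_def)

lemma markov_iter_Suc': "markov_iter K (Suc t) \<mu> = markov_iter K t (bind_pmf \<mu> K)"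
  by (simp add: markov_iter_def funpow_Suc_right del: funpow.simps)

lemma markov_iter_bind: "markov_iter K t (bind_pmf \<mu> f) = bind_pmf \<mu> (\<lambda>x. markov_iter K t (f x))"
  by (induction t) (simp_all add: markov_iter_Suc bind_assoc_pmf)

lemma markov_iter_eq_bind: "markov_iter K t \<mu> = bind_pmf \<mu> (\<lambda>x. markov_iter K t (return_pmf x))"
  using markov_iter_bind[of K t \<mu> return_pmf] by (simp add: bind_return_pmf')

lemma markov_iter_Suc_return:
  "markov_iter K (Suc t) (return_pmf x) = bind_pmf (K x) (\<lambda>y. markov_iter K t (return_pmf y))"
  by (simp add: markov_iter_Suc' bind_return_pmf markov_iter_eq_bind[of K t "K x"])

lemma emeasure_markov_iter:
  "emeasure (markov_iter K t \<mu>) A = (\<integral>\<^sup>+x. emeasure (markov_iter K t (return_pmf x)) A \<partial>\<mu>)"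
  by (subst markov_iter_eq_bind) simp

lemma set_pmf_markov_iter:
  assumes "\<And>x. x \<in> \<Omega> \<Longrightarrow> set_pmf (K x) \<subseteq> \<Omega>" "set_pmf \<mu> \<subseteq> \<Omega>"
  shows "set_pmf (markov_iter K t \<mu>) \<subseteq> \<Omega>"
  using assms by (induction t) (auto simp: markov_iter_Suc)

lemma markov_iter_stopped_return:
  "x \<in> S \<Longrightarrow> markov_iter (stopped S K) t (return_pmf x) = return_pmf x"
  by (induction t) (simp_all add: markov_iter_Suc bind_return_pmf stopped_def)

lemma hitting_time_le_potential:
  fixes V :: "'a \<Rightarrow> ennreal"
  assumes closed: "\<And>x. x \<in> \<Omega> \<Longrightarrow> set_pmf (K x) \<subseteq> \<Omega>" and start: "set_pmf \<mu> \<subseteq> \<Omega>"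
    and absorbing: "K opt = return_pmf opt"
    and drift: "\<And>x. x \<in> \<Omega> \<Longrightarrow> x \<noteq> opt \<Longrightarrow> 1 + (\<integral>\<^sup>+y. V y \<partial>K x) \<le> V x"
  shows "(\<Sum>t. emeasure (markov_iter K t \<mu>) {x. x \<noteq> opt}) \<le> (\<integral>\<^sup>+x. V x \<partial>\<mu>)"
proof -
  let ?tail = "\<lambda>t. emeasure (markov_iter K t \<mu>) {x. x \<noteq> opt}"
  let ?V = "\<lambda>t. \<integral>\<^sup>+x. V x \<partial>markov_iter K t \<mu>"
  have step: "?tail t + ?V (Suc t) \<le> ?V t" for t
  proof -
    have "?tail t + ?V (Suc t)
      = (\<integral>\<^sup>+x. indicator {x. x \<noteq> opt} x + (\<integral>\<^sup>+y. V y \<partial>K x) \<partial>markov_iter K t \<mu>)"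
      by (simp add: markov_iter_Suc nn_integral_add)
    also have "\<dots> \<le> ?V t"
    proof (rule nn_integral_mono_AE, rule AE_pmfI)
      fix x assume "x \<in> set_pmf (markov_iter K t \<mu>)"
      then have "x \<in> \<Omega>" using set_pmf_markov_iter[of \<Omega> K \<mu> t] closed start by blast
      then show "indicator {x. x \<noteq> opt} x + (\<integral>\<^sup>+y. V y \<partial>K x) \<le> V x"
        using drift[of x] by (cases "x = opt") (auto simp: absorbing)
    qed
    finally show ?thesis .
  qed
  have "(\<Sum>t<T. ?tail t) + ?V T \<le> ?V 0" for T
  proof (induction T)
    case (Suc T)
    have "(\<Sum>t<Suc T. ?tail t) + ?V (Suc T) = (\<Sum>t<T. ?tail t) + (?tail T + ?V (Suc T))"
      by (simp add: add.assoc)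
    also have "\<dots> \<le> (\<Sum>t<T. ?tail t) + ?V T"
      by (rule add_left_mono[OF step])
    finally show ?case using Suc.IH by (rule order_trans)
  qed simp
  then have "(\<Sum>t<T. ?tail t) \<le> ?V 0" for T
    by (rule order_trans[rotated, OF _ add_increasing2]) auto
  then show ?thesis by (intro suminf_le_const) auto
qed

lemma emeasure_absorbing_le_stopped:
  assumes "opt \<in> S" "K opt = return_pmf opt"
  shows "emeasure (markov_iter K t \<mu>) {opt} \<le> emeasure (markov_iter (stopped S K) t \<mu>) S"
proof -
  have "emeasure (markov_iter K t (return_pmf x)) {opt}
      \<le> emeasure (markov_iter (stopped S K) t (return_pmf x)) S" for x
  proof (induction t arbitrary: x)
    case 0 then show ?case using assms by (auto simp: indicator_def)
  next
    case (Suc t)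
    show ?case
    proof (cases "x \<in> S")
      case True
      then show ?thesis by (simp add: markov_iter_stopped_return measure_pmf.emeasure_le_1)
    next
      case False
      have "emeasure (markov_iter K (Suc t) (return_pmf x)) {opt}
          = (\<integral>\<^sup>+y. emeasure (markov_iter K t (return_pmf y)) {opt} \<partial>K x)"
        by (simp add: markov_iter_Suc_return)
      also have "\<dots> \<le> (\<integral>\<^sup>+y. emeasure (markov_iter (stopped S K) t (return_pmf y)) S \<partial>K x)"
        by (rule nn_integral_mono) (rule Suc.IH)
      also have "\<dots> = emeasure (markov_iter (stopped S K) (Suc t) (return_pmf x)) S"
        using False by (simp add: markov_iter_Suc_return stopped_def)
      finally show ?thesis .
    qed
  qed
  then show ?thesis
    by (subst (1 2) emeasure_markov_iter) (rule nn_integral_mono)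
qed

definition occupation :: "('a \<Rightarrow> 'a pmf) \<Rightarrow> 'a set \<Rightarrow> nat \<Rightarrow> 'a pmf \<Rightarrow> ennreal" where
  "occupation K D T \<mu> = (\<Sum>t<T. emeasure (markov_iter K t \<mu>) D)"

lemma occupation_eq_nn_integral:
  "occupation K D T \<mu> = (\<integral>\<^sup>+x. occupation K D T (return_pmf x) \<partial>\<mu>)"
  unfolding occupation_def by (subst emeasure_markov_iter) (simp add: nn_integral_sum)

lemma occupation_Suc_return:
  "occupation K D (Suc T) (return_pmf x) = indicator D x + (\<integral>\<^sup>+y. occupation K D T (return_pmf y) \<partial>K x)"
  unfolding occupation_def
  by (subst sum.lessThan_Suc_shift) (simp add: markov_iter_Suc_return nn_integral_sum)

lemma occupation_mono: "T \<le> T' \<Longrightarrow> occupation K D T \<mu> \<le> occupation K D T' \<mu>"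
  unfolding occupation_def by (rule sum_mono2) auto

text \<open>If the stopped chain halts at time t \<le> s, the original chain continues from the same state,
  and its next T steps fall within the first T + s steps.\<close>

lemma occupation_after_stopped:
  "(\<integral>\<^sup>+x. occupation K D T (return_pmf x) \<partial>markov_iter (stopped S K) s \<mu>)
     \<le> (\<integral>\<^sup>+x. occupation K D (T + s) (return_pmf x) \<partial>\<mu>)"
proof (induction s arbitrary: T \<mu>)
  case (Suc s)
  have one_step: "(\<integral>\<^sup>+y. occupation K D T' (return_pmf y) \<partial>stopped S K x)
      \<le> occupation K D (Suc T') (return_pmf x)" for T' x
    by (cases "x \<in> S") (simp add: stopped_def occupation_mono, simp add: stopped_def occupation_Suc_return)
  have "(\<integral>\<^sup>+x. occupation K D T (return_pmf x) \<partial>markov_iter (stopped S K) (Suc s) \<mu>)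
      \<le> (\<integral>\<^sup>+x. occupation K D (T + s) (return_pmf x) \<partial>bind_pmf \<mu> (stopped S K))"
    unfolding markov_iter_Suc' by (rule Suc.IH)
  also have "\<dots> \<le> (\<integral>\<^sup>+x. occupation K D (Suc (T + s)) (return_pmf x) \<partial>\<mu>)"
    by (simp add: nn_integral_mono one_step)
  finally show ?case by simp
qed simp

lemma occupation_ge_geometric:
  fixes q :: real and K :: "'a \<Rightarrow> 'a pmf"
  assumes stay: "\<And>x. x \<in> D \<Longrightarrow> ennreal (1 - q) \<le> emeasure (K x) D" and "0 \<le> q" "q \<le> 1"
    and "x \<in> D"
  shows "ennreal (\<Sum>t<T. (1 - q) ^ t) \<le> occupation K D T (return_pmf x)"
proof -
  have "ennreal ((1 - q) ^ t) \<le> emeasure (markov_iter K t (return_pmf x)) D" if "x \<in> D" for t x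
    using that
  proof (induction t arbitrary: x)
    case (Suc t)
    have "ennreal ((1 - q) ^ Suc t) = ennreal ((1 - q) ^ t) * ennreal (1 - q)"
      using assms by (simp add: ennreal_mult[symmetric] mult.commute)
    also have "\<dots> \<le> ennreal ((1 - q) ^ t) * emeasure (K x) D"
      by (rule mult_left_mono[OF stay[OF Suc.prems]]) simp
    also have "\<dots> = (\<integral>\<^sup>+y. ennreal ((1 - q) ^ t) * indicator D y \<partial>K x)"
      by (simp add: nn_integral_cmult)
    also have "\<dots> \<le> (\<integral>\<^sup>+y. emeasure (markov_iter K t (return_pmf y)) D \<partial>K x)"
      by (rule nn_integral_mono) (auto simp: indicator_def Suc.IH)
    also have "\<dots> = emeasure (markov_iter K (Suc t) (return_pmf x)) D"
      by (simp add: markov_iter_Suc_return)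
    finally show ?case .
  qed simp
  then have "(\<Sum>t<T. ennreal ((1 - q) ^ t)) \<le> occupation K D T (return_pmf x)"
    unfolding occupation_def using \<open>x \<in> D\<close> by (intro sum_mono) auto
  then show ?thesis
    using assms by (subst sum_ennreal[symmetric]) auto
qed

lemma occupation_ge_stopped:
  fixes q :: real and K :: "'a \<Rightarrow> 'a pmf"
  assumes stay: "\<And>x. x \<in> D \<Longrightarrow> ennreal (1 - q) \<le> emeasure (K x) D" and q: "0 \<le> q" "q \<le> 1"
  shows "emeasure (markov_iter (stopped S K) s \<mu>) D * ennreal (\<Sum>t<T. (1 - q) ^ t)
     \<le> occupation K D (T + s) \<mu>"
proof -
  have "emeasure (markov_iter (stopped S K) s \<mu>) D * ennreal (\<Sum>t<T. (1 - q) ^ t)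
      = (\<integral>\<^sup>+x. indicator D x * ennreal (\<Sum>t<T. (1 - q) ^ t) \<partial>markov_iter (stopped S K) s \<mu>)"
    by (simp add: nn_integral_multc)
  also have "\<dots> \<le> (\<integral>\<^sup>+x. occupation K D T (return_pmf x) \<partial>markov_iter (stopped S K) s \<mu>)"
    by (intro nn_integral_mono)
      (auto simp: indicator_def intro: occupation_ge_geometric[OF stay q])
  also have "\<dots> \<le> occupation K D (T + s) \<mu>"
    by (subst occupation_eq_nn_integral) (rule occupation_after_stopped)
  finally show ?thesis .
qed

lemma occupation_le_suminf: "occupation K D T \<mu> \<le> (\<Sum>t. emeasure (markov_iter K t \<mu>) D)"
  unfolding occupation_def by (rule sum_le_suminf) auto

lemma occupation_mono_set: "D \<subseteq> D' \<Longrightarrow> occupation K D T \<mu> \<le> occupation K D' T \<mu>"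
  unfolding occupation_def by (intro sum_mono emeasure_mono) auto

lemma sum_occupation_disjoint:
  "disjoint_family_on D I \<Longrightarrow> finite I \<Longrightarrow>
    (\<Sum>i\<in>I. occupation K (D i) T \<mu>) = occupation K (\<Union>i\<in>I. D i) T \<mu>"
  unfolding occupation_def by (subst sum.swap) (simp add: sum_emeasure)

section \<open>Standard bit mutation\<close>

fun mutation_prob :: "real \<Rightarrow> bool list \<Rightarrow> bool list \<Rightarrow> real" where
  "mutation_prob p [] [] = 1"
| "mutation_prob p (a # as) (b # bs) = (if a = b then 1 - p else p) * mutation_prob p as bs"
| "mutation_prob p _ _ = 0"

fun hamming :: "bool list \<Rightarrow> bool list \<Rightarrow> nat" where
  "hamming (a # as) (b # bs) = (if a = b then 0 else 1) + hamming as bs"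
| "hamming _ _ = 0"

lemma mutate_Cons: "mutate p (b # bs) =
  bind_pmf (bernoulli_pmf p) (\<lambda>f. map_pmf ((#) (if f then \<not> b else b)) (mutate p bs))"
  by (simp add: map_pmf_def)

lemma pmf_map_Cons:
  "pmf (map_pmf ((#) c) M) y = (case y of [] \<Rightarrow> 0 | d # ys \<Rightarrow> if c = d then pmf M ys else 0)"
proof (cases "\<exists>ys. y = c # ys")
  case True
  then show ?thesis by (auto simp: pmf_map_inj')
next
  case False
  then have "(#) c -` {y} = {}" by auto
  then show ?thesis using False by (simp add: pmf_map split: list.split)
qed

lemma pmf_mutate: "0 \<le> p \<Longrightarrow> p \<le> 1 \<Longrightarrow> pmf (mutate p x) y = mutation_prob p x y"
proof (induction x arbitrary: y)
  case Nil then show ?case by (cases y) auto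
next
  case (Cons b bs)
  then show ?case
    by (cases y) (auto simp del: mutate.simps simp: mutate_Cons pmf_bind pmf_map_Cons)
qed

lemma set_pmf_mutate: "set_pmf (mutate p x) \<subseteq> {y. length y = length x}"
  by (induction x) auto

lemma map_drop_mutate: "map_pmf (drop a) (mutate p x) = mutate p (drop a x)"
proof (induction x arbitrary: a)
  case (Cons b bs)
  show ?case
  proof (cases a)
    case 0 then show ?thesis by (simp add: pmf.map_id0[unfolded id_def])
  next
    case (Suc a')
    have "map_pmf (drop a) (mutate p (b # bs)) =
      bind_pmf (bernoulli_pmf p) (\<lambda>f. map_pmf (drop a') (mutate p bs))"
      by (simp del: mutate.simps add: mutate_Cons map_bind_pmf pmf.map_comp o_def Suc)
    then show ?thesis using Cons Suc by (simp del: mutate.simps add: bind_pmf_const)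
  qed
qed simp

lemma map_take_mutate: "map_pmf (take a) (mutate p x) = mutate p (take a x)"
proof (induction x arbitrary: a)
  case (Cons b bs)
  show ?case
  proof (cases a)
    case 0 then show ?thesis by (simp add: map_pmf_const)
  next
    case (Suc a')
    have "map_pmf (take a) (mutate p (b # bs)) = bind_pmf (bernoulli_pmf p)
        (\<lambda>f. map_pmf ((#) (if f then \<not> b else b)) (map_pmf (take a') (mutate p bs)))"
      by (simp del: mutate.simps add: mutate_Cons map_bind_pmf pmf.map_comp o_def Suc)
    then show ?thesis using Cons Suc by (simp del: mutate.simps add: mutate_Cons)
  qed
qed simp

lemma mutation_prob_length: "length x \<noteq> length y \<Longrightarrow> mutation_prob p x y = 0"
  by (induction p x y rule: mutation_prob.induct) auto

lemma mutation_prob_append: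
  "length a = length c \<Longrightarrow> mutation_prob p (a @ b) (c @ d) = mutation_prob p a c * mutation_prob p b d"
  by (induction p a c rule: mutation_prob.induct) auto

lemma mutation_prob_map_Not: "mutation_prob p (map Not a) (map Not c) = mutation_prob p a c"
  by (induction p a c rule: mutation_prob.induct) auto

lemma hamming_le_length: "hamming x y \<le> length x"
  by (induction x y rule: hamming.induct) auto

lemma mutation_prob_hamming:
  "length x = length y \<Longrightarrow> mutation_prob p x y = p ^ hamming x y * (1 - p) ^ (length x - hamming x y)"
proof (induction p x y rule: mutation_prob.induct)
  case (2 p a as b bs)
  have "hamming as bs \<le> length as" by (rule hamming_le_length)
  then show ?case using 2 by (auto simp: Suc_diff_le)
qed auto

lemma hamming_append: "length a = length c \<Longrightarrow> hamming (a @ b) (c @ d) = hamming a c + hamming b d"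
  by (induction a c rule: hamming.induct) auto

lemma hamming_self [simp]: "hamming x x = 0"
  by (induction x) auto

lemma hamming_replicate: "hamming (replicate r b) (replicate r c) = (if b = c then 0 else r)"
  by (induction r) auto

lemma hamming_flip: "j < length z \<Longrightarrow> hamming z (z[j := \<not> z ! j]) = 1"
proof (induction z arbitrary: j)
  case (Cons a z)
  then show ?case by (cases j) auto
qed simp

lemma pmf_mutate_ge:
  assumes "length x = n" "length y = n" "1 \<le> n"
  shows "(1 / real n) ^ hamming x y * (1 - 1 / real n) ^ n \<le> pmf (mutate (1 / real n) x) y"
proof -
  have "(1 - 1 / real n) ^ n \<le> (1 - 1 / real n) ^ (n - hamming x y)"
    using assms by (intro power_decreasing) auto
  then show ?thesis
    using assms by (simp add: pmf_mutate mutation_prob_hamming mult_left_mono)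
qed

section \<open>Leading ones and blocks\<close>

definition leading_ones :: "bool list \<Rightarrow> nat" where
  "leading_ones x = length (takeWhile id x)"

definition block :: "nat \<Rightarrow> nat \<Rightarrow> bool list \<Rightarrow> bool list" where
  "block k i x = take k (drop (i * k) x)"

lemma leading_ones_le_length: "leading_ones x \<le> length x"
  unfolding leading_ones_def by (rule length_takeWhile_le)

lemma nth_less_leading_ones: "j < leading_ones x \<Longrightarrow> x ! j"
  unfolding leading_ones_def by (metis id_apply nth_mem set_takeWhileD takeWhile_nth)

lemma nth_leading_ones: "leading_ones x < length x \<Longrightarrow> \<not> x ! leading_ones x"
  unfolding leading_ones_def using nth_length_takeWhile by fastforce

lemma le_leading_ones_iff: "a \<le> length x \<Longrightarrow> a \<le> leading_ones x \<longleftrightarrow> (\<forall>j<a. x ! j)"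
  using nth_less_leading_ones nth_leading_ones
  by (metis leI order.strict_trans1 order.strict_trans2)

lemma leading_ones_replicate_True [simp]: "leading_ones (replicate n True) = n"
  unfolding leading_ones_def by simp

lemma leading_ones_eq_if_take_eq:
  assumes "take a x = take a y" "leading_ones x < a" "a \<le> length x" "a \<le> length y"
  shows "leading_ones y = leading_ones x"
proof -
  have eq: "j < a \<Longrightarrow> x ! j = y ! j" for j
    by (metis assms(1) nth_take)
  have "\<forall>j<leading_ones x. y ! j"
    using eq nth_less_leading_ones assms(2) by (metis order.strict_trans)
  then have "leading_ones x \<le> leading_ones y"
    using le_leading_ones_iff[of "leading_ones x" y] assms by (meson less_imp_le_nat order.strict_trans2)
  moreover have "\<not> y ! leading_ones x"
    using eq[of "leading_ones x"] assms nth_leading_ones[of x] by auto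
  then have "leading_ones y \<le> leading_ones x"
    using nth_less_leading_ones[of "leading_ones x" y] by (meson not_le)
  ultimately show ?thesis by simp
qed

lemma le_leading_ones_if_take_eq:
  assumes "take a x = take a y" "a \<le> length x" "a \<le> length y"
  shows "a \<le> leading_ones x \<longleftrightarrow> a \<le> leading_ones y"
  using le_leading_ones_iff[of a x] le_leading_ones_iff[of a y] assms by (metis nth_take)

lemma length_block: "(i + 1) * k \<le> length x \<Longrightarrow> length (block k i x) = k"
  unfolding block_def by auto

lemma nth_block: "j < k \<Longrightarrow> (i + 1) * k \<le> length x \<Longrightarrow> block k i x ! j = x ! (i * k + j)"
  unfolding block_def by auto

lemma block_take: "(i + 1) * k \<le> a \<Longrightarrow> block k i (take a x) = block k i x"
  unfolding block_def by (simp add: drop_take min_def algebra_simps)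

lemma block_eq_replicate_True:
  assumes le: "(i + 1) * k \<le> leading_ones x"
  shows "block k i x = replicate k True"
proof -
  have len: "(i + 1) * k \<le> length x" using le leading_ones_le_length order_trans by blast
  show ?thesis
  proof (rule nth_equalityI)
    fix j assume "j < length (block k i x)"
    then have j: "j < k" using length_block[OF len] by simp
    have "i * k + j < leading_ones x" using le j by (simp add: algebra_simps)
    then show "block k i x ! j = replicate k True ! j"
      using nth_block[OF j len] nth_less_leading_ones j by simp
  qed (simp add: length_block[OF len])
qed

lemma block_eq_replicate_True_iff:
  assumes "i * k \<le> leading_ones x" "(i + 1) * k \<le> length x"
  shows "block k i x = replicate k True \<longleftrightarrow> (i + 1) * k \<le> leading_ones x"
proof
  assume ones: "block k i x = replicate k True"
  have "x ! j" if j: "j < (i + 1) * k" for j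
  proof (cases "j < i * k")
    case True then show ?thesis using assms nth_less_leading_ones by auto
  next
    case False
    then have "j - i * k < k" using j by (simp add: algebra_simps)
    then show ?thesis using nth_block[OF _ assms(2), of "j - i * k"] ones False by simp
  qed
  then show "(i + 1) * k \<le> leading_ones x" using le_leading_ones_iff[OF assms(2)] by blast
qed (rule block_eq_replicate_True)

definition replace_block :: "nat \<Rightarrow> nat \<Rightarrow> bool list \<Rightarrow> bool list \<Rightarrow> bool list" where
  "replace_block k i x w = take (i * k) x @ w @ drop (i * k + k) x"

lemma replace_block_block: "i * k + k \<le> length x \<Longrightarrow> replace_block k i x (block k i x) = x"
  unfolding replace_block_def block_def
  by (metis append.assoc append_take_drop_id drop_drop take_add add.commute)

lemma replace_block_simps:
  assumes "i * k + k \<le> length x" "length w = k"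
  shows "length (replace_block k i x w) = length x"
    and "block k i (replace_block k i x w) = w"
    and "take (i * k) (replace_block k i x w) = take (i * k) x"
    and "replace_block k i (replace_block k i x w) w' = replace_block k i x w'"
  using assms by (simp_all add: replace_block_def block_def)

lemma hamming_replace_block:
  assumes "i * k + k \<le> length x" "length w = k"
  shows "hamming x (replace_block k i x w) = hamming (block k i x) w"
proof -
  have "hamming x (replace_block k i x w) = hamming (replace_block k i x (block k i x)) (replace_block k i x w)"
    using replace_block_block[OF assms(1)] by simp
  also have "\<dots> = hamming (block k i x) w"
    using assms by (simp add: replace_block_def hamming_append length_block)
  finally show ?thesis .
qed

lemma mutation_prob_replace_block:
  assumes "i * k + k \<le> length x" "length y = length x" "length w = k" "length w' = k"
  shows "mutation_prob p (replace_block k i x w) (replace_block k i y w')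
    = mutation_prob p (take (i * k) x) (take (i * k) y) * mutation_prob p w w'
      * mutation_prob p (drop (i * k + k) x) (drop (i * k + k) y)"
  using assms by (simp add: replace_block_def mutation_prob_append)

lemma map_block_mutate: "map_pmf (block k i) (mutate p x) = mutate p (block k i x)"
proof -
  have "map_pmf (block k i) (mutate p x) = map_pmf (take k) (map_pmf (drop (i * k)) (mutate p x))"
    unfolding block_def by (simp add: pmf.map_comp o_def)
  then show ?thesis by (simp add: map_drop_mutate map_take_mutate block_def)
qed

section \<open>The block function\<close>

definition complement_tail :: "nat \<Rightarrow> nat \<Rightarrow> bool list \<Rightarrow> bool list" where
  "complement_tail k r z = take (k - r) z @ map Not (drop (k - r) z)"

definition trap :: "nat \<Rightarrow> nat \<Rightarrow> bool list" where
  "trap k r = replicate r False @ replicate (k - 2 * r) True @ replicate r False"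

text \<open>Complementing and exchanging the first and last r bits of a block swaps \<^term>\<open>trap k r\<close>
  with the optimum and leaves the value of g unchanged elsewhere.\<close>

definition reflect :: "nat \<Rightarrow> nat \<Rightarrow> bool list \<Rightarrow> bool list" where
  "reflect k r z = map Not (drop (k - r) z) @ take (k - 2 * r) (drop r z) @ map Not (take r z)"

definition gvalue :: "nat \<Rightarrow> nat \<Rightarrow> bool list \<Rightarrow> nat" where
  "gvalue k r z = (if z = replicate k True then k + 2 else if z = trap k r then k + 1
     else ones (complement_tail k r z))"

definition improvement_distance :: "nat \<Rightarrow> nat \<Rightarrow> nat \<Rightarrow> nat" where
  "improvement_distance k r v = (if v = k + 1 then 2 * r else if v = k then r else 1)"

lemma ones_append [simp]: "ones (a @ b) = ones a + ones b"
  unfolding ones_def by simp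

lemma ones_le_length: "ones a \<le> length a"
  unfolding ones_def by simp

lemma ones_eq_length_iff: "ones t = length t \<longleftrightarrow> (\<forall>j<length t. t ! j)"
  unfolding ones_def
  by (metis filter_id_conv id_apply all_set_conv_all_nth length_filter_less less_irrefl)

lemma ones_flip: "j < length t \<Longrightarrow> \<not> t ! j \<Longrightarrow> ones (t[j := True]) = ones t + 1"
proof (induction t arbitrary: j)
  case (Cons a t)
  then show ?case by (cases j) (auto simp: ones_def)
qed simp

lemma replicate_split3:
  "2 * r \<le> k \<Longrightarrow> replicate k b = replicate r b @ replicate (k - 2 * r) b @ replicate r b"
  by (simp flip: replicate_add)

lemma block_split3:
  assumes "length z = k" "2 * r \<le> k"
  obtains z1 z2 z3 where "z = z1 @ z2 @ z3" "length z1 = r" "length z2 = k - 2 * r" "length z3 = r"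
proof
  have "drop (k - r) z = drop (k - 2 * r) (drop r z)" using assms by (simp add: algebra_simps)
  then show "z = take r z @ take (k - 2 * r) (drop r z) @ drop (k - r) z"
    by (metis append_take_drop_id)
qed (use assms in auto)

lemma complement_tail_split:
  "length z1 = r \<Longrightarrow> length z2 = k - 2 * r \<Longrightarrow> length z3 = r \<Longrightarrow> 2 * r \<le> k \<Longrightarrow>
    complement_tail k r (z1 @ z2 @ z3) = z1 @ z2 @ map Not z3"
  unfolding complement_tail_def by simp

lemma reflect_split:
  "length z1 = r \<Longrightarrow> length z2 = k - 2 * r \<Longrightarrow> length z3 = r \<Longrightarrow> 2 * r \<le> k \<Longrightarrow>
    reflect k r (z1 @ z2 @ z3) = map Not z3 @ z2 @ map Not z1"
  unfolding reflect_def by simp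

lemma length_complement_tail [simp]: "length (complement_tail k r z) = length z"
  unfolding complement_tail_def by simp

lemma nth_complement_tail:
  "i < length z \<Longrightarrow> complement_tail k r z ! i = (if i < k - r then z ! i else \<not> z ! i)"
  unfolding complement_tail_def by (auto simp: nth_append min_def)

lemma complement_tail_flip:
  "j < length z \<Longrightarrow>
    complement_tail k r (z[j := \<not> z ! j]) = (complement_tail k r z)[j := \<not> complement_tail k r z ! j]"
  by (rule nth_equalityI) (auto simp: nth_complement_tail nth_list_update)

lemma length_trap [simp]: "2 * r \<le> k \<Longrightarrow> length (trap k r) = k"
  unfolding trap_def by simp

lemma trap_ne_replicate_True: "1 \<le> r \<Longrightarrow> trap k r \<noteq> replicate k True"
  unfolding trap_def by (cases r; cases k) auto

lemma gvalue_trap: "1 \<le> r \<Longrightarrow> gvalue k r (trap k r) = k + 1"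
  using trap_ne_replicate_True by (simp add: gvalue_def)

lemma hamming_trap: "2 * r \<le> k \<Longrightarrow> hamming (trap k r) (replicate k True) = 2 * r"
  unfolding trap_def
  by (subst replicate_split3[of r k True]) (simp_all add: hamming_append hamming_replicate)

lemma complement_tail_eq_iff:
  assumes "length z = k" "2 * r \<le> k"
  shows "complement_tail k r z = replicate r False @ replicate (k - r) True \<longleftrightarrow> z = trap k r"
    and "complement_tail k r z = replicate (k - r) True @ replicate r False \<longleftrightarrow> z = replicate k True"
    and "complement_tail k r z = replicate k True \<longleftrightarrow> z = replicate (k - r) True @ replicate r False"
proof -
  obtain z1 z2 z3 where z: "z = z1 @ z2 @ z3" "length z1 = r" "length z2 = k - 2 * r" "length z3 = r"
    using block_split3[OF assms] .
  have split: "replicate (k - r) b = replicate (k - 2 * r) b @ replicate r b"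
    "replicate (k - r) b = replicate r b @ replicate (k - 2 * r) b" for b
    using assms(2) by (simp_all flip: replicate_add)
  have Not_eq: "map Not a = c \<longleftrightarrow> a = map Not c" for a c
    by (auto simp: map_map comp_def)
  show "complement_tail k r z = replicate r False @ replicate (k - r) True \<longleftrightarrow> z = trap k r"
    unfolding z(1) complement_tail_split[OF z(2-4) assms(2)] trap_def split(1)
    using z(2-4) by (simp add: Not_eq)
  show "complement_tail k r z = replicate (k - r) True @ replicate r False \<longleftrightarrow> z = replicate k True"
    unfolding z(1) complement_tail_split[OF z(2-4) assms(2)] replicate_split3[OF assms(2)] split(2)
    using z(2-4) by (simp add: Not_eq)
  show "complement_tail k r z = replicate k True \<longleftrightarrow> z = replicate (k - r) True @ replicate r False"
    unfolding z(1) complement_tail_split[OF z(2-4) assms(2)] replicate_split3[OF assms(2)] split(2)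
    using z(2-4) by (simp add: Not_eq)
qed

lemma gblock_eq_gvalue:
  assumes "length z = k" "2 * r \<le> k" "1 \<le> r"
  shows "gblock k r z = real (gvalue k r z)"
proof -
  have "replicate (k - r) True @ replicate r False \<noteq> replicate r False @ replicate (k - r) True"
    using assms by (cases r; cases "k - r") auto
  then show ?thesis
    unfolding gblock_def gvalue_def fork_def
    using complement_tail_eq_iff(1,2)[OF assms(1,2)] trap_ne_replicate_True[OF assms(3)]
    by (fold complement_tail_def) auto
qed

lemma gvalue_le:
  "length z = k \<Longrightarrow> z \<noteq> replicate k True \<Longrightarrow> gvalue k r z \<le> k + 1"
  using ones_le_length[of "complement_tail k r z"] by (auto simp: gvalue_def)

lemma gvalue_eq_Suc_iff:
  "length z = k \<Longrightarrow> z \<noteq> replicate k True \<Longrightarrow> 1 \<le> r \<Longrightarrow> gvalue k r z = k + 1 \<longleftrightarrow> z = trap k r"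
  using ones_le_length[of "complement_tail k r z"] trap_ne_replicate_True
  by (auto simp: gvalue_def)

lemma reflect_involution:
  assumes "length z = k" "2 * r \<le> k"
  shows "reflect k r (reflect k r z) = z" and "length (reflect k r z) = k"
proof -
  obtain z1 z2 z3 where z: "z = z1 @ z2 @ z3" "length z1 = r" "length z2 = k - 2 * r" "length z3 = r"
    using block_split3[OF assms] .
  show "reflect k r (reflect k r z) = z" "length (reflect k r z) = k"
    unfolding z(1) using z(2-4) assms(2) by (simp_all add: reflect_split comp_def)
qed

lemma reflect_trap: "2 * r \<le> k \<Longrightarrow> reflect k r (trap k r) = replicate k True"
  unfolding trap_def by (subst reflect_split) (simp_all add: replicate_split3)

lemma reflect_replicate_True: "2 * r \<le> k \<Longrightarrow> reflect k r (replicate k True) = trap k r"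
  unfolding trap_def by (subst replicate_split3, assumption, subst reflect_split) auto

lemma reflect_eq_replicate_True_iff:
  "length z = k \<Longrightarrow> 2 * r \<le> k \<Longrightarrow> reflect k r z = replicate k True \<longleftrightarrow> z = trap k r"
  by (metis reflect_involution(1) reflect_replicate_True reflect_trap)

lemma reflect_eq_trap_iff:
  "length z = k \<Longrightarrow> 2 * r \<le> k \<Longrightarrow> reflect k r z = trap k r \<longleftrightarrow> z = replicate k True"
  by (metis reflect_involution(1) reflect_replicate_True reflect_trap)

lemma gvalue_reflect:
  assumes "length z = k" "2 * r \<le> k" "z \<noteq> replicate k True" "z \<noteq> trap k r"
  shows "gvalue k r (reflect k r z) = gvalue k r z"
proof -
  obtain z1 z2 z3 where z: "z = z1 @ z2 @ z3" "length z1 = r" "length z2 = k - 2 * r" "length z3 = r"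
    using block_split3[OF assms(1,2)] .
  have "ones (complement_tail k r (reflect k r z)) = ones (complement_tail k r z)"
    unfolding z(1) using z(2-4) assms(2) by (simp add: reflect_split complement_tail_split comp_def)
  then show ?thesis
    using assms by (simp add: gvalue_def reflect_eq_replicate_True_iff reflect_eq_trap_iff)
qed

lemma mutation_prob_reflect:
  assumes "length a = k" "length b = k" "2 * r \<le> k"
  shows "mutation_prob p (reflect k r a) (reflect k r b) = mutation_prob p a b"
proof -
  obtain a1 a2 a3 where a: "a = a1 @ a2 @ a3" "length a1 = r" "length a2 = k - 2 * r" "length a3 = r"
    using block_split3[OF assms(1,3)] .
  obtain b1 b2 b3 where b: "b = b1 @ b2 @ b3" "length b1 = r" "length b2 = k - 2 * r" "length b3 = r"
    using block_split3[OF assms(2,3)] .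
  show ?thesis unfolding a(1) b(1) using a(2-4) b(2-4) assms(3)
    by (simp add: reflect_split mutation_prob_append mutation_prob_map_Not)
qed

lemma gvalue_flip:
  assumes z: "length z = k" and not_opt: "z \<noteq> replicate k True" and not_trap: "z \<noteq> trap k r"
    and j: "j < k" "\<not> complement_tail k r z ! j"
  shows "gvalue k r z < k"
    and "z[j := \<not> z ! j] \<noteq> replicate k True \<Longrightarrow> gvalue k r z < gvalue k r (z[j := \<not> z ! j])"
proof -
  have g: "gvalue k r z = ones (complement_tail k r z)"
    using not_trap not_opt by (simp add: gvalue_def)
  show less: "gvalue k r z < k"
    using g j z ones_eq_length_iff[of "complement_tail k r z"] ones_le_length[of "complement_tail k r z"]
    by (metis length_complement_tail le_neq_implies_less)
  assume not_opt': "z[j := \<not> z ! j] \<noteq> replicate k True"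
  show "gvalue k r z < gvalue k r (z[j := \<not> z ! j])"
  proof (cases "z[j := \<not> z ! j] = trap k r")
    case False
    have "complement_tail k r (z[j := \<not> z ! j]) = (complement_tail k r z)[j := True]"
      using complement_tail_flip[of j z k r] j z by simp
    then have "ones (complement_tail k r (z[j := \<not> z ! j])) = ones (complement_tail k r z) + 1"
      using ones_flip[of j "complement_tail k r z"] j z by simp
    then show ?thesis using not_opt' False g by (simp add: gvalue_def)
  qed (use not_opt' less in \<open>simp add: gvalue_def\<close>)
qed

lemma block_improvement:
  assumes z: "length z = k" and kr: "2 * r \<le> k" and r: "1 \<le> r"
    and not_opt: "z \<noteq> replicate k True"
  obtains z' where "length z' = k" "hamming z z' = improvement_distance k r (gvalue k r z)"
    "z' = replicate k True \<or> gvalue k r z < gvalue k r z'"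
proof -
  consider (trap) "z = trap k r"
    | (local_opt) "z \<noteq> trap k r" "complement_tail k r z = replicate k True"
    | (flip) j where "z \<noteq> trap k r" "j < k" "\<not> complement_tail k r z ! j"
  proof (cases "z = trap k r")
    case False
    show ?thesis
    proof (cases "\<forall>j<k. complement_tail k r z ! j")
      case True
      then have "complement_tail k r z = replicate k True"
        using z by (simp add: list_eq_iff_nth_eq)
      then show ?thesis using that(2) False by blast
    qed (use that(3) False in blast)
  qed (use that(1) in blast)
  then show ?thesis
  proof cases
    case trap
    then show ?thesis
      using that[of "replicate k True"] hamming_trap[OF kr] gvalue_trap[OF r]
      by (simp add: improvement_distance_def)
  next
    case local_opt
    have "replicate k True = replicate (k - r) True @ replicate r True"
      using kr by (simp flip: replicate_add)
    then have "hamming z (replicate k True) = r"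
      using local_opt complement_tail_eq_iff(3)[OF z kr]
      by (simp add: hamming_append hamming_replicate)
    moreover have "gvalue k r z = k"
      using local_opt not_opt z by (simp add: gvalue_def ones_def)
    ultimately show ?thesis
      using that[of "replicate k True"] r by (simp add: improvement_distance_def)
  next
    case flip
    define z' where "z' = z[j := \<not> z ! j]"
    have "improvement_distance k r (gvalue k r z) = 1"
      using gvalue_flip(1)[OF z not_opt flip] by (simp add: improvement_distance_def)
    moreover have "length z' = k" "hamming z z' = 1"
      unfolding z'_def using hamming_flip flip z by auto
    ultimately show ?thesis
      using gvalue_flip(2)[OF z not_opt flip] by (intro that[of z']) (auto simp: z'_def)
  qed
qed

section \<open>The fitness function\<close>

definition full_blocks :: "nat \<Rightarrow> bool list \<Rightarrow> nat" where
  "full_blocks k x = leading_ones x div k"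

definition fitness :: "nat \<Rightarrow> nat \<Rightarrow> nat \<Rightarrow> bool list \<Rightarrow> nat" where
  "fitness n k r x = full_blocks k x * (k + 2)
     + (if full_blocks k x < n div k then gvalue k r (block k (full_blocks k x) x) else 0)"

lemma sum_below_at:
  "P \<le> M \<Longrightarrow> (\<Sum>i<M. if i < P then a else if i = P then b else 0)
    = real P * a + (if P < M then b else (0::real))"
proof (induction M)
  case (Suc M)
  then show ?case
    by (cases "P = Suc M") (auto simp: algebra_simps)
qed simp

lemma prod_indicator_prefix:
  assumes "a \<le> length x"
  shows "(\<Prod>j<a. if x ! j then 1 else 0 :: real) = (if a \<le> leading_ones x then 1 else 0)"
proof (cases "a \<le> leading_ones x")
  case True
  then show ?thesis using nth_less_leading_ones by (auto intro!: prod.neutral)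
next
  case False
  then have "\<not> x ! leading_ones x" using assms nth_leading_ones by simp
  then show ?thesis using False by (auto intro!: prod_zero bexI[of _ "leading_ones x"])
qed

locale lo_fork_setting =
  fixes n k r :: nat
  assumes n_ge_2: "2 \<le> n" and k_dvd_n: "k dvd n" and r_pos: "1 \<le> r" and two_r_le_k: "2 * r \<le> k"
begin

abbreviation "nblocks \<equiv> n div k"

abbreviation "ea_kernel \<equiv> ea_step (lo_fork n k r) n (replicate n True)"

abbreviation "initial \<equiv> pmf_of_set {x :: bool list. length x = n}"

lemma k_pos: "0 < k"
  using r_pos two_r_le_k by simp

lemma nblocks_mult: "nblocks * k = n"
  using k_dvd_n by simp

lemma block_end_le: "i < nblocks \<Longrightarrow> i * k + k \<le> n"
  using nblocks_mult by (metis add.commute mult_Suc mult_le_mono1 Suc_leI)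

lemma length_block_of: "length x = n \<Longrightarrow> i < nblocks \<Longrightarrow> length (block k i x) = k"
  using block_end_le[of i] by (simp add: length_block algebra_simps)

lemma full_blocks_le: "length x = n \<Longrightarrow> full_blocks k x \<le> nblocks"
  unfolding full_blocks_def using leading_ones_le_length[of x] by (simp add: div_le_mono)

lemma full_blocks_mult_le: "full_blocks k x * k \<le> leading_ones x"
  unfolding full_blocks_def by (simp add: div_times_less_eq_dividend)

lemma leading_ones_less: "leading_ones x < (full_blocks k x + 1) * k"
  unfolding full_blocks_def using k_pos
  by (metis Suc_eq_plus1 dividend_less_div_times mult.commute mult_Suc_right add.commute)

lemma full_blocks_eqI: "i * k \<le> leading_ones y \<Longrightarrow> leading_ones y < (i + 1) * k \<Longrightarrow> full_blocks k y = i"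
  unfolding full_blocks_def using k_pos
  by (metis add.commute less_eq_div_iff_mult_less_eq div_less_iff_less_mult le_antisym
      less_Suc_eq_le plus_1_eq_Suc)

lemma full_blocks_greaterI: "(i + 1) * k \<le> leading_ones y \<Longrightarrow> i < full_blocks k y"
  unfolding full_blocks_def using k_pos less_eq_div_iff_mult_less_eq by (metis Suc_eq_plus1 Suc_le_eq)

lemma full_blocks_eq_nblocks_iff:
  assumes "length x = n"
  shows "full_blocks k x = nblocks \<longleftrightarrow> x = replicate n True"
proof
  assume "full_blocks k x = nblocks"
  then have "n \<le> leading_ones x" using full_blocks_mult_le nblocks_mult by metis
  then have "\<forall>j<n. x ! j" using nth_less_leading_ones by (meson order.strict_trans2)
  then show "x = replicate n True" using assms by (simp add: list_eq_iff_nth_eq)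
qed (simp add: full_blocks_def)

lemma block_full_blocks_ne:
  assumes "length x = n" "full_blocks k x < nblocks"
  shows "block k (full_blocks k x) x \<noteq> replicate k True"
  using block_eq_replicate_True_iff[of "full_blocks k x" k x] full_blocks_mult_le[of x]
    leading_ones_less[of x] block_end_le[OF assms(2)] assms(1)
  by (auto simp: algebra_simps)

lemma gvalue_current_block_le:
  "length x = n \<Longrightarrow> full_blocks k x < nblocks \<Longrightarrow> gvalue k r (block k (full_blocks k x) x) \<le> k + 1"
  using gvalue_le length_block_of block_full_blocks_ne by blast

lemma lo_fork_eq_fitness:
  assumes "length x = n"
  shows "lo_fork n k r x = real (fitness n k r x)"
proof -
  let ?P = "full_blocks k x"
  have "lo_fork n k r x = (\<Sum>i<nblocks. if i < ?P then real (k + 2)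
      else if i = ?P then real (gvalue k r (block k ?P x)) else 0)"
    unfolding lo_fork_def block_def[symmetric]
  proof (rule sum.cong[OF refl])
    fix i assume "i \<in> {..<nblocks}"
    then have i: "i < nblocks" by simp
    have "(\<Prod>j<i * k. if x ! j then 1 else 0 :: real) = (if i \<le> ?P then 1 else 0)"
      using prod_indicator_prefix[of "i * k" x] block_end_le[OF i] assms k_pos
      by (simp add: full_blocks_def less_eq_div_iff_mult_less_eq)
    moreover have "gblock k r (block k i x) = real (gvalue k r (block k i x))"
      using gblock_eq_gvalue[OF length_block_of[OF assms i] two_r_le_k r_pos] .
    moreover have "block k i x = replicate k True" if "i < ?P"
    proof (rule block_eq_replicate_True)
      have "(i + 1) * k \<le> ?P * k" using that by (intro mult_le_mono1) simp
      then show "(i + 1) * k \<le> leading_ones x" using full_blocks_mult_le order_trans by blast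
    qed
    ultimately show "gblock k r (block k i x) * (\<Prod>j<i * k. if x ! j then 1 else 0) =
      (if i < ?P then real (k + 2) else if i = ?P then real (gvalue k r (block k ?P x)) else 0)"
      by (auto simp: gvalue_def)
  qed
  also have "\<dots> = real (fitness n k r x)"
    by (simp add: sum_below_at[OF full_blocks_le[OF assms]] fitness_def algebra_simps)
  finally show ?thesis .
qed

lemma fitness_le:
  assumes "length x = n" "full_blocks k x < nblocks"
  shows "fitness n k r x \<le> full_blocks k x * (k + 2) + (k + 1)"
  using gvalue_current_block_le[OF assms] assms unfolding fitness_def by simp

lemma fitness_ge: "full_blocks k x * (k + 2) \<le> fitness n k r x"
  unfolding fitness_def by simp

lemma fitness_less_if_full_blocks_less:
  assumes "length x = n" "length y = n" "full_blocks k x < full_blocks k y"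
  shows "fitness n k r x < fitness n k r y"
proof -
  have "full_blocks k x < nblocks" using assms full_blocks_le[OF assms(2)] by simp
  then have "fitness n k r x < (full_blocks k x + 1) * (k + 2)" using fitness_le[OF assms(1)] by simp
  also have "\<dots> \<le> full_blocks k y * (k + 2)" using assms(3) by (intro mult_le_mono1) simp
  also have "\<dots> \<le> fitness n k r y" by (rule fitness_ge)
  finally show ?thesis .
qed

lemma full_blocks_le_if_fitness_le:
  assumes "length x = n" "length y = n" "fitness n k r x \<le> fitness n k r y"
  shows "full_blocks k x \<le> full_blocks k y"
  using fitness_less_if_full_blocks_less[OF assms(2,1)] assms(3) by (meson leD le_less_linear)

lemma fitness_compare_same_full_blocks:
  assumes "full_blocks k x = full_blocks k y" "full_blocks k x < nblocks"
  shows "fitness n k r x \<le> fitness n k r y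
      \<longleftrightarrow> gvalue k r (block k (full_blocks k x) x) \<le> gvalue k r (block k (full_blocks k y) y)"
    and "fitness n k r x < fitness n k r y
      \<longleftrightarrow> gvalue k r (block k (full_blocks k x) x) < gvalue k r (block k (full_blocks k y) y)"
  using assms unfolding fitness_def by auto

lemma fitness_improvement:
  assumes x: "length x = n" and P: "full_blocks k x < nblocks"
  obtains y where "length y = n" "fitness n k r x < fitness n k r y"
    "hamming x y = improvement_distance k r (gvalue k r (block k (full_blocks k x) x))"
proof -
  let ?P = "full_blocks k x"
  let ?z = "block k ?P x"
  have end_le: "?P * k + k \<le> length x" using block_end_le[OF P] x by simp
  obtain z' where z': "length z' = k" "hamming ?z z' = improvement_distance k r (gvalue k r ?z)"
    "z' = replicate k True \<or> gvalue k r ?z < gvalue k r z'"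
    using block_improvement[OF length_block_of[OF x P] two_r_le_k r_pos block_full_blocks_ne[OF x P]] .
  define y where "y = replace_block k ?P x z'"
  have y: "length y = n" "block k ?P y = z'" "?P * k \<le> leading_ones y"
    using replace_block_simps[OF end_le z'(1)] le_leading_ones_if_take_eq[of "?P * k" x y]
      full_blocks_mult_le[of x] end_le x
    unfolding y_def by auto
  have "fitness n k r x < fitness n k r y"
  proof (cases "z' = replicate k True")
    case True
    then have "?P < full_blocks k y"
      using y block_eq_replicate_True_iff[of ?P k y] end_le x
      by (intro full_blocks_greaterI) (simp add: algebra_simps)
    then show ?thesis using fitness_less_if_full_blocks_less x y(1) by blast
  next
    case False
    then have "full_blocks k y = ?P"
      using y block_eq_replicate_True_iff[of ?P k y] end_le x
      by (intro full_blocks_eqI) (auto simp: algebra_simps)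
    then show ?thesis
      using fitness_compare_same_full_blocks(2)[of x y] P y(2) z'(3) False by simp
  qed
  moreover have "hamming x y = hamming ?z z'"
    unfolding y_def using hamming_replace_block[OF end_le z'(1)] .
  ultimately show ?thesis using that y(1) z'(2) by simp
qed

end

section \<open>The (1+1) EA as a Markov chain\<close>

lemma ea_expected_time_eq_markov_iter:
  "ea_expected_time F n opt =
    (\<Sum>t. emeasure (markov_iter (ea_step F n opt) t (pmf_of_set {x. length x = n})) {x. x \<noteq> opt})"
  unfolding ea_expected_time_def ea_state_def markov_iter_def measure_pmf.emeasure_eq_measure ..

lemma ea_step_opt: "ea_step F n opt opt = return_pmf opt"
  by (simp add: ea_step_def)

lemma ea_step_not_opt:
  "x \<noteq> opt \<Longrightarrow>
    ea_step F n opt x = bind_pmf (mutate (1 / real n) x) (\<lambda>y. return_pmf (if F x \<le> F y then y else x))"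
  by (simp add: ea_step_def)

lemma set_pmf_ea_step: "length x = n \<Longrightarrow> set_pmf (ea_step F n opt x) \<subseteq> {y. length y = n}"
  using set_pmf_mutate[of "1 / real n" x] by (auto simp: ea_step_def)

lemma lists_length_finite_nonempty:
  "finite {x :: bool list. length x = n}" "{x :: bool list. length x = n} \<noteq> {}"
  using finite_lists_length_eq[of "UNIV :: bool set" n]
  by (auto intro: exI[of _ "replicate n True"])

lemma set_pmf_uniform_lists: "set_pmf (pmf_of_set {x :: bool list. length x = n}) = {x. length x = n}"
  using lists_length_finite_nonempty by simp

section \<open>Upper bound\<close>

lemma one_minus_inverse_power_ge:
  assumes "2 \<le> n" shows "exp (-2) \<le> (1 - 1 / real n) ^ n"
proof -
  have n0: "0 < real n" using assms by simp
  have h: "- (1 / real n) - 2 * (1 / real n)^2 \<le> ln (1 - 1 / real n)"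
    using assms by (intro ln_one_minus_pos_lower_bound) (auto simp: field_simps)
  have "real n * (- (1 / real n) - 2 * (1 / real n)^2) = -1 - 2 / real n"
    using n0 by (simp add: field_simps power2_eq_square)
  also have "\<dots> \<ge> -2" using assms by (simp add: field_simps)
  finally have "-2 \<le> real n * ln (1 - 1 / real n)"
    using mult_left_mono[OF h, of "real n"] n0 by linarith
  then have "exp (-2) \<le> exp (real n * ln (1 - 1 / real n))" by simp
  also have "\<dots> = (1 - 1 / real n) ^ n"
    using assms by (simp add: exp_of_nat_mult exp_ln field_simps)
  finally show ?thesis .
qed

context lo_fork_setting
begin

text \<open>From g-level v of the current block, an improvement at Hamming distance
  improvement_distance k r v has probability at least rho / n ^ improvement_distance k r v, so
  wait v bounds the expected time to leave level v; the potential of x adds these waiting times over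
  the remaining levels of the current block and block_potential for every later block.\<close>

definition rho :: real where
  "rho = (1 - 1 / real n) ^ n"

definition wait :: "nat \<Rightarrow> real" where
  "wait v = real n ^ improvement_distance k r v / rho"

definition level_potential :: "nat \<Rightarrow> real" where
  "level_potential v = (if v = k + 1 then real n ^ (2 * r) / rho
     else real (k - v) * (real n / rho) + real n ^ r / rho + real n ^ (2 * r) / rho)"

definition block_potential :: real where
  "block_potential = real k * (real n / rho) + real n ^ r / rho + real n ^ (2 * r) / rho"

definition potential :: "bool list \<Rightarrow> real" where
  "potential x = (if full_blocks k x < nblocks
     then real (nblocks - full_blocks k x - 1) * block_potential
       + level_potential (gvalue k r (block k (full_blocks k x) x))
     else 0)"

lemma rho_pos: "0 < rho"
  unfolding rho_def using n_ge_2 by simp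

lemma wait_nonneg: "0 \<le> wait v"
  unfolding wait_def using rho_pos by simp

lemma block_potential_nonneg: "0 \<le> block_potential"
  unfolding block_potential_def using rho_pos by simp

lemma level_potential_bounds:
  assumes "v \<le> k + 1"
  shows "0 \<le> level_potential v" "level_potential v \<le> block_potential" "wait v \<le> level_potential v"
proof -
  have a: "0 \<le> real n / rho" "0 \<le> real n ^ r / rho" "0 \<le> real n ^ (2 * r) / rho"
    using rho_pos by auto
  have "0 \<le> real (k - v) * (real n / rho)" using a(1) by (intro mult_nonneg_nonneg) auto
  then show "0 \<le> level_potential v" unfolding level_potential_def using a by auto
  have "real (k - v) * (real n / rho) \<le> real k * (real n / rho)"
    using a(1) by (intro mult_right_mono) auto
  then show "level_potential v \<le> block_potential"
    unfolding level_potential_def block_potential_def using a by auto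
  have "real n / rho \<le> real (k - v) * (real n / rho)" if "v < k"
    using mult_right_mono[OF _ a(1), of 1 "real (k - v)"] that by simp
  then show "wait v \<le> level_potential v"
    unfolding wait_def level_potential_def improvement_distance_def using a assms
    by (cases "v < k") auto
qed

lemma level_potential_decrease:
  assumes "v < w" "w \<le> k + 1"
  shows "level_potential w + wait v \<le> level_potential v"
proof -
  have a: "0 \<le> real n / rho" "0 \<le> real n ^ r / rho" using rho_pos by auto
  show ?thesis
  proof (cases "w = k + 1")
    case True
    have "real n / rho \<le> real (k - v) * (real n / rho)" if "v < k"
      using mult_right_mono[OF _ a(1), of 1 "real (k - v)"] that by simp
    then show ?thesis
      using True assms a unfolding level_potential_def wait_def improvement_distance_def
      by (cases "v = k") auto
  next
    case False
    then have "v < k" "w \<le> k" using assms by auto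
    then have "(real (k - w) + 1) * (real n / rho) \<le> real (k - v) * (real n / rho)"
      using assms(1) a(1) by (intro mult_right_mono) auto
    then show ?thesis
      using False \<open>v < k\<close> unfolding level_potential_def wait_def improvement_distance_def
      by (simp add: distrib_right add_divide_distrib)
  qed
qed

lemma level_potential_antimono: "v \<le> w \<Longrightarrow> w \<le> k + 1 \<Longrightarrow> level_potential w \<le> level_potential v"
  using level_potential_decrease[of v w] wait_nonneg[of v] by (cases "v = w") auto

lemma potential_eq:
  "full_blocks k x < nblocks \<Longrightarrow> potential x
    = real (nblocks - full_blocks k x - 1) * block_potential + level_potential (gvalue k r (block k (full_blocks k x) x))"
  by (simp add: potential_def)

lemma potential_bounds:
  assumes "length x = n"
  shows "0 \<le> potential x" "potential x \<le> real nblocks * block_potential"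
proof -
  have "0 \<le> potential x \<and> potential x \<le> real nblocks * block_potential"
  proof (cases "full_blocks k x < nblocks")
    case P: True
    note lp = level_potential_bounds[OF gvalue_current_block_le[OF assms P]]
    have "(real (nblocks - full_blocks k x - 1) + 1) * block_potential \<le> real nblocks * block_potential"
      using P block_potential_nonneg by (intro mult_right_mono) linarith+
    moreover have "0 \<le> real (nblocks - full_blocks k x - 1) * block_potential"
      using block_potential_nonneg by simp
    ultimately show ?thesis using lp(1,2) potential_eq[OF P] by (simp add: distrib_right)
  qed (use block_potential_nonneg in \<open>simp add: potential_def\<close>)
  then show "0 \<le> potential x" "potential x \<le> real nblocks * block_potential" by auto
qed

lemma potential_decrease:
  assumes x: "length x = n" and y: "length y = n" and P: "full_blocks k x < nblocks"
    and le: "fitness n k r x \<le> fitness n k r y"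
  defines "v \<equiv> gvalue k r (block k (full_blocks k x) x)"
  shows "potential y + (if fitness n k r x < fitness n k r y then wait v else 0) \<le> potential x"
proof -
  have v_le: "v \<le> k + 1"
    unfolding v_def by (rule gvalue_current_block_le[OF x P])
  note Vx = potential_eq[OF P, folded v_def]
  have wait_le: "wait v \<le> level_potential v"
    using level_potential_bounds(3)[OF v_le] .
  have "full_blocks k x \<le> full_blocks k y"
    by (rule full_blocks_le_if_fitness_le[OF x y le])
  show ?thesis
  proof (cases "full_blocks k y < nblocks")
    case False
    then have "potential y = 0" by (simp add: potential_def)
    moreover have "0 \<le> real (nblocks - full_blocks k x - 1) * block_potential"
      using block_potential_nonneg by simp
    ultimately show ?thesis using Vx wait_le wait_nonneg[of v] by auto
  next
    case Q: True
    define w where "w = gvalue k r (block k (full_blocks k y) y)"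
    have w_le: "w \<le> k + 1"
      unfolding w_def by (rule gvalue_current_block_le[OF y Q])
    note Vy = potential_eq[OF Q, folded w_def]
    show ?thesis
    proof (cases "full_blocks k x = full_blocks k y")
      case True
      then have "v \<le> w" "fitness n k r x < fitness n k r y \<Longrightarrow> v < w"
        using fitness_compare_same_full_blocks[OF True P] le unfolding v_def w_def by auto
      then show ?thesis
        using level_potential_antimono[OF _ w_le] level_potential_decrease[OF _ w_le] Vx Vy True
        by (auto simp: wait_nonneg)
    next
      case False
      then have "real (nblocks - full_blocks k y - 1) + 1 \<le> real (nblocks - full_blocks k x - 1)"
        using \<open>full_blocks k x \<le> full_blocks k y\<close> Q by linarith
      then have "real (nblocks - full_blocks k y - 1) * block_potential + block_potential
          \<le> real (nblocks - full_blocks k x - 1) * block_potential"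
        using mult_right_mono[OF _ block_potential_nonneg] by (fastforce simp: distrib_right)
      then show ?thesis
        using Vx Vy wait_le wait_nonneg[of v] level_potential_bounds(2)[OF w_le] by auto
    qed
  qed
qed

lemma wait_mult_pmf_mutate_ge:
  assumes "length x = n" "length y = n" "hamming x y = improvement_distance k r v"
  shows "1 \<le> wait v * pmf (mutate (1 / real n) x) y"
proof -
  let ?d = "improvement_distance k r v"
  have "real n ^ ?d / rho * ((1 / real n) ^ ?d * rho) \<le> wait v * pmf (mutate (1 / real n) x) y"
    unfolding wait_def using pmf_mutate_ge[of x n y] assms n_ge_2 rho_pos
    by (intro mult_left_mono) (auto simp: rho_def)
  moreover have "real n ^ ?d / rho * ((1 / real n) ^ ?d * rho) = 1"
    using rho_pos n_ge_2 by (simp add: power_one_over field_simps)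
  ultimately show ?thesis by simp
qed

text \<open>Only the improving offspring from fitness_improvement is counted; no accepted offspring
  increases the potential.\<close>

lemma potential_drift:
  assumes x: "length x = n" and not_opt: "x \<noteq> replicate n True"
  shows "1 + (\<integral>\<^sup>+y. ennreal (potential y) \<partial>ea_kernel x)
    \<le> ennreal (potential x)"
proof -
  let ?F = "lo_fork n k r"
  let ?M = "mutate (1 / real n) x"
  define acc where "acc y = (if ?F x \<le> ?F y then y else x)" for y
  have P: "full_blocks k x < nblocks"
    using full_blocks_le[OF x] full_blocks_eq_nblocks_iff[OF x] not_opt by fastforce
  define v where "v = gvalue k r (block k (full_blocks k x) x)"
  obtain y' where y': "length y' = n" "fitness n k r x < fitness n k r y'"
    "hamming x y' = improvement_distance k r v"
    using fitness_improvement[OF x P] unfolding v_def .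
  have pointwise: "ennreal (wait v) * indicator {y'} y + ennreal (potential (acc y)) \<le> ennreal (potential x)"
    if "y \<in> set_pmf ?M" for y
  proof -
    have y: "length y = n" using that set_pmf_mutate[of "1 / real n" x] x by auto
    have acc: "?F x \<le> ?F y \<longleftrightarrow> fitness n k r x \<le> fitness n k r y"
      using lo_fork_eq_fitness[OF x] lo_fork_eq_fitness[OF y] by simp
    have le: "wait v * indicator {y'} y + potential (acc y) \<le> potential x"
      using potential_decrease[OF x y P] potential_decrease[OF x y'(1) P] y'(2) wait_nonneg[of v]
      unfolding acc_def acc v_def by (auto simp: indicator_def split: if_splits)
    have "0 \<le> potential (acc y)"
      using potential_bounds(1) x y by (simp add: acc_def)
    with le show ?thesis
      using wait_nonneg[of v] by (cases "y = y'") (simp_all flip: ennreal_plus)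
  qed
  have "1 \<le> ennreal (wait v) * emeasure ?M {y'}"
    using wait_mult_pmf_mutate_ge[OF x y'(1,3)] wait_nonneg[of v]
    by (simp add: emeasure_pmf_single ennreal_mult[symmetric] ennreal_leI)
  then have "1 + (\<integral>\<^sup>+y. ennreal (potential y) \<partial>ea_kernel x)
      \<le> (\<integral>\<^sup>+y. ennreal (wait v) * indicator {y'} y + ennreal (potential (acc y)) \<partial>?M)"
    using not_opt
    by (simp add: ea_step_not_opt acc_def nn_integral_add nn_integral_cmult_indicator add_right_mono)
  also have "\<dots> \<le> (\<integral>\<^sup>+y. ennreal (potential x) \<partial>?M)"
    by (rule nn_integral_mono_AE) (auto intro!: AE_pmfI pointwise)
  finally show ?thesis by (simp add: measure_pmf.emeasure_space_1)
qed

lemma nblocks_mult_block_potential_le: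
  "real nblocks * block_potential \<le> 3 * exp 2 * real n ^ (2 * r + 1) / real k"
proof -
  have n1: "1 \<le> real n" using n_ge_2 by simp
  have "real k * real n \<le> real n ^ 2"
    using dvd_imp_le[OF k_dvd_n] n_ge_2 by (simp add: power2_eq_square mult_right_mono)
  also have "\<dots> \<le> real n ^ (2 * r)" using n1 r_pos by (intro power_increasing) auto
  finally have "block_potential \<le> 3 * real n ^ (2 * r) / rho"
    unfolding block_potential_def using power_increasing[OF _ n1, of r "2 * r"] rho_pos
    by (simp add: add_divide_distrib[symmetric] divide_right_mono)
  also have "\<dots> \<le> 3 * real n ^ (2 * r) * exp 2"
  proof -
    have "1 \<le> exp 2 * rho"
      using mult_left_mono[OF one_minus_inverse_power_ge[OF n_ge_2], of "exp 2"]
      by (simp add: exp_minus rho_def)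
    then show ?thesis
      using rho_pos mult_left_mono[of 1 "exp 2 * rho" "3 * real n ^ (2 * r)"]
      by (simp add: divide_le_eq mult.assoc)
  qed
  finally have "real nblocks * block_potential \<le> real nblocks * (3 * real n ^ (2 * r) * exp 2)"
    by (intro mult_left_mono) auto
  also have "\<dots> = 3 * exp 2 * real n ^ (2 * r + 1) / real k"
    using k_dvd_n by (simp add: real_of_nat_div field_simps)
  finally show ?thesis .
qed

lemma ea_expected_time_le:
  "ea_expected_time (lo_fork n k r) n (replicate n True) \<le> ennreal (3 * exp 2 * real n ^ (2 * r + 1) / real k)"
proof -
  have "ea_expected_time (lo_fork n k r) n (replicate n True) \<le> (\<integral>\<^sup>+x. ennreal (potential x) \<partial>initial)"
    unfolding ea_expected_time_eq_markov_iter
    by (rule hitting_time_le_potential[where \<Omega> = "{x. length x = n}"])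
      (auto simp: set_pmf_ea_step set_pmf_uniform_lists ea_step_opt potential_drift)
  also have "\<dots> \<le> (\<integral>\<^sup>+x. ennreal (real nblocks * block_potential) \<partial>initial)"
    by (rule nn_integral_mono_AE, rule AE_pmfI, intro ennreal_leI potential_bounds(2))
      (simp add: set_pmf_uniform_lists)
  also have "\<dots> \<le> ennreal (3 * exp 2 * real n ^ (2 * r + 1) / real k)"
    using nblocks_mult_block_potential_le by (simp add: measure_pmf.emeasure_space_1 ennreal_leI)
  finally show ?thesis .
qed

end

section \<open>Lower bound\<close>

lemma mutate_involution:
  assumes f_len: "\<And>y. length y = length x \<Longrightarrow> length (f y) = length x"
    and f_f: "\<And>y. length y = length x \<Longrightarrow> f (f y) = y"
    and f_prob: "\<And>y. length y = length x \<Longrightarrow> mutation_prob p (f x) (f y) = mutation_prob p x y"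
    and p: "0 \<le> p" "p \<le> 1"
  shows "mutate p (f x) = map_pmf f (mutate p x)"
proof (rule pmf_eqI)
  fix w
  let ?M = "mutate p x"
  have supp: "y \<in> set_pmf ?M \<Longrightarrow> length y = length x" for y using set_pmf_mutate[of p x] by auto
  have "pmf (map_pmf f ?M) w = measure ?M (f -` {w} \<inter> set_pmf ?M)"
    by (simp add: pmf_map measure_Int_set_pmf)
  also have "f -` {w} \<inter> set_pmf ?M = (if length w = length x then {f w} \<inter> set_pmf ?M else {})"
  proof (intro set_eqI iffI)
    fix y assume "y \<in> f -` {w} \<inter> set_pmf ?M"
    then have "f y = w" "y \<in> set_pmf ?M" "length y = length x" using supp by auto
    then show "y \<in> (if length w = length x then {f w} \<inter> set_pmf ?M else {})"
      using f_f[of y] f_len[of y] by auto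
  qed (use f_f in \<open>auto split: if_splits\<close>)
  finally have map: "pmf (map_pmf f ?M) w = (if length w = length x then pmf ?M (f w) else 0)"
    by (simp add: measure_Int_set_pmf measure_pmf_single)
  show "pmf (mutate p (f x)) w = pmf (map_pmf f ?M) w"
  proof (cases "length w = length x")
    case True
    then show ?thesis
      using map f_prob[of "f w"] f_len f_f by (simp add: pmf_mutate[OF p])
  next
    case False
    then show ?thesis
      using map f_len[of x] by (simp add: pmf_mutate[OF p] mutation_prob_length)
  qed
qed

locale lo_fork_block = lo_fork_setting +
  fixes m :: nat
  assumes m_less: "m < nblocks"
begin

definition reflect_block :: "bool list \<Rightarrow> bool list" where
  "reflect_block x = replace_block k m x (reflect k r (block k m x))"

definition trapped :: "bool list set" where
  "trapped = {x. length x = n \<and> full_blocks k x = m \<and> block k m x = trap k r}"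

definition decided :: "bool list set" where
  "decided = {x. length x = n \<and> m * k \<le> leading_ones x
     \<and> (block k m x = replicate k True \<or> block k m x = trap k r)}"

lemma block_m_end: "m * k + k \<le> n"
  using block_end_le[OF m_less] .

lemma reflect_block_simps:
  assumes x: "length x = n"
  shows "length (reflect_block x) = n"
    and "take (m * k) (reflect_block x) = take (m * k) x"
    and "block k m (reflect_block x) = reflect k r (block k m x)"
    and "reflect_block (reflect_block x) = x"
proof -
  have b: "length (block k m x) = k" by (rule length_block_of[OF x m_less])
  have end_le: "m * k + k \<le> length x" using block_m_end x by simp
  note rb = replace_block_simps[OF end_le reflect_involution(2)[OF b two_r_le_k]]
  show "length (reflect_block x) = n" "take (m * k) (reflect_block x) = take (m * k) x"
    "block k m (reflect_block x) = reflect k r (block k m x)"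
    unfolding reflect_block_def using rb x by simp_all
  show "reflect_block (reflect_block x) = x"
    unfolding reflect_block_def rb(2) rb(4)
    by (simp add: reflect_involution(1)[OF b two_r_le_k] replace_block_block[OF end_le])
qed

lemma mutate_reflect_block:
  assumes x: "length x = n" and p: "0 \<le> p" "p \<le> 1"
  shows "mutate p (reflect_block x) = map_pmf reflect_block (mutate p x)"
proof (rule mutate_involution[OF _ _ _ p])
  fix y :: "bool list" assume "length y = length x"
  then have y: "length y = n" using x by simp
  have b: "length (block k m x) = k" "length (block k m y) = k"
    using length_block_of[OF _ m_less] x y by auto
  have end_le: "m * k + k \<le> length x" using block_m_end x by simp
  show "length (reflect_block y) = length x" "reflect_block (reflect_block y) = y"
    using reflect_block_simps[OF y] x by simp_all
  have "mutation_prob p (replace_block k m x (block k m x)) (replace_block k m y (block k m y))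
      = mutation_prob p (reflect_block x) (reflect_block y)"
    unfolding reflect_block_def using end_le x y b
    by (simp add: mutation_prob_replace_block mutation_prob_reflect[OF b two_r_le_k]
        reflect_involution(2)[OF _ two_r_le_k])
  then show "mutation_prob p (reflect_block x) (reflect_block y) = mutation_prob p x y"
    using replace_block_block end_le x y by simp
qed

lemma m_succ_block_end: "(m + 1) * k \<le> n"
  using block_m_end by (simp add: algebra_simps)

lemma le_leading_ones_reflect_block:
  "length x = n \<Longrightarrow> m * k \<le> leading_ones (reflect_block x) \<longleftrightarrow> m * k \<le> leading_ones x"
  using le_leading_ones_if_take_eq[OF reflect_block_simps(2)[symmetric]] reflect_block_simps(1)
    block_m_end by simp

lemma full_blocks_eq_m:
  assumes "length x = n" "m * k \<le> leading_ones x" "block k m x \<noteq> replicate k True"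
  shows "full_blocks k x = m"
  using assms block_eq_replicate_True_iff[of m k x] m_succ_block_end
  by (intro full_blocks_eqI) auto

lemma trapped_iff:
  "length x = n \<Longrightarrow> x \<in> trapped \<longleftrightarrow> m * k \<le> leading_ones x \<and> block k m x = trap k r"
  unfolding trapped_def
  using full_blocks_mult_le[of x] full_blocks_eq_m[of x] trap_ne_replicate_True[OF r_pos] by auto

lemma trapped_subset_decided: "trapped \<subseteq> decided"
  unfolding decided_def using trapped_iff unfolding trapped_def by blast

lemma replicate_True_in_decided: "replicate n True \<in> decided"
  unfolding decided_def using block_eq_replicate_True[of m k "replicate n True"] m_succ_block_end
  by simp

lemma reflect_block_in_decided_iff:
  assumes x: "length x = n"
  shows "reflect_block x \<in> decided \<longleftrightarrow> x \<in> decided"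
proof -
  have b: "length (block k m x) = k" using length_block_of[OF x m_less] .
  show ?thesis
    unfolding decided_def
    using x reflect_block_simps(1,3)[OF x] le_leading_ones_reflect_block[OF x]
      reflect_eq_replicate_True_iff[OF b two_r_le_k] reflect_eq_trap_iff[OF b two_r_le_k]
    by auto
qed

lemma reflect_block_in_decided_diff_trapped_iff:
  assumes x: "length x = n"
  shows "reflect_block x \<in> decided - trapped \<longleftrightarrow> x \<in> trapped"
proof -
  have b: "length (block k m x) = k" using length_block_of[OF x m_less] .
  have "reflect_block x \<in> decided - trapped
      \<longleftrightarrow> m * k \<le> leading_ones (reflect_block x) \<and> block k m (reflect_block x) = replicate k True"
    unfolding decided_def using trapped_iff[OF reflect_block_simps(1)[OF x]]
      not_sym[OF trap_ne_replicate_True[OF r_pos]] reflect_block_simps(1)[OF x] by auto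
  also have "\<dots> \<longleftrightarrow> x \<in> trapped"
    using le_leading_ones_reflect_block[OF x] reflect_block_simps(3)[OF x]
      reflect_eq_replicate_True_iff[OF b two_r_le_k] trapped_iff[OF x] by simp
  finally show ?thesis .
qed

text \<open>In particular, the EA never leaves the decided states.\<close>

lemma decided_iff_fitness_ge:
  assumes x: "length x = n"
  shows "x \<in> decided \<longleftrightarrow> m * (k + 2) + k + 1 \<le> fitness n k r x"
proof (cases "m * k \<le> leading_ones x")
  case True
  show ?thesis
  proof (cases "block k m x = replicate k True")
    case ones: True
    then have "m < full_blocks k x"
      using block_eq_replicate_True_iff[of m k x] m_succ_block_end True x
      by (intro full_blocks_greaterI) auto
    then have "(m + 1) * (k + 2) \<le> full_blocks k x * (k + 2)" by (intro mult_le_mono1) simp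
    then show ?thesis using fitness_ge[of x] ones True x by (simp add: decided_def)
  next
    case False
    have P: "full_blocks k x = m" using full_blocks_eq_m[OF x True False] .
    have "gvalue k r (block k m x) = k + 1 \<longleftrightarrow> block k m x = trap k r"
      using gvalue_eq_Suc_iff[OF length_block_of[OF x m_less] False r_pos] .
    then show ?thesis
      using gvalue_le[OF length_block_of[OF x m_less] False, of r] x True False P m_less
      by (auto simp: decided_def fitness_def)
  qed
next
  case False
  then have "full_blocks k x * k < m * k" using full_blocks_mult_le[of x] by linarith
  then have less: "full_blocks k x < m" using mult_less_cancel2 by blast
  then have "fitness n k r x \<le> full_blocks k x * (k + 2) + (k + 1)"
    using fitness_le[OF x] m_less by simp
  also have "\<dots> < (full_blocks k x + 1) * (k + 2)" by simp
  also have "\<dots> \<le> m * (k + 2)" using less by (intro mult_le_mono1) simp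
  finally show ?thesis using False by (simp add: decided_def)
qed

lemma fitness_reflect_block:
  assumes x: "length x = n" and not_decided: "x \<notin> decided"
  shows "fitness n k r (reflect_block x) = fitness n k r x"
proof (cases "m * k \<le> leading_ones x")
  case False
  then have lt: "leading_ones x < m * k" by simp
  have "leading_ones (reflect_block x) = leading_ones x"
    using leading_ones_eq_if_take_eq[OF reflect_block_simps(2)[OF x, symmetric] lt]
      x block_m_end reflect_block_simps(1)[OF x] by simp
  then have P: "full_blocks k (reflect_block x) = full_blocks k x" by (simp add: full_blocks_def)
  have "full_blocks k x * k < m * k" using full_blocks_mult_le[of x] lt by linarith
  then have "(full_blocks k x + 1) * k \<le> m * k"
    using mult_less_cancel2 by (intro mult_le_mono1) (metis Suc_eq_plus1 Suc_leI)
  then have "block k (full_blocks k x) (reflect_block x) = block k (full_blocks k x) x"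
    using block_take[of "full_blocks k x" k "m * k" "reflect_block x"]
      block_take[of "full_blocks k x" k "m * k" x] reflect_block_simps(2)[OF x] by simp
  then show ?thesis unfolding fitness_def P by simp
next
  case True
  have b: "length (block k m x) = k" using length_block_of[OF x m_less] .
  have ne: "block k m x \<noteq> replicate k True" "block k m x \<noteq> trap k r"
    using not_decided x True by (auto simp: decided_def)
  have P: "full_blocks k x = m" using full_blocks_eq_m[OF x True ne(1)] .
  have ne': "block k m (reflect_block x) \<noteq> replicate k True"
    using reflect_block_simps(3)[OF x] reflect_eq_replicate_True_iff[OF b two_r_le_k] ne(2) by simp
  have P': "full_blocks k (reflect_block x) = m"
    using full_blocks_eq_m[OF reflect_block_simps(1)[OF x] _ ne'] le_leading_ones_reflect_block[OF x] True
    by simp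
  show ?thesis
    unfolding fitness_def P P' reflect_block_simps(3)[OF x] gvalue_reflect[OF b two_r_le_k ne] ..
qed

lemma lo_fork_reflect_block_le_iff:
  assumes x: "length x = n" "x \<notin> decided" and y: "length y = n"
  shows "lo_fork n k r (reflect_block x) \<le> lo_fork n k r (reflect_block y) \<longleftrightarrow> lo_fork n k r x \<le> lo_fork n k r y"
proof -
  have x': "length (reflect_block x) = n" and y': "length (reflect_block y) = n"
    using reflect_block_simps(1) x y by auto
  have "fitness n k r (reflect_block x) \<le> fitness n k r (reflect_block y) \<longleftrightarrow> fitness n k r x \<le> fitness n k r y"
  proof (cases "y \<in> decided")
    case True
    then show ?thesis
      using decided_iff_fitness_ge[OF y'] decided_iff_fitness_ge[OF y] decided_iff_fitness_ge[OF x(1)]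
        reflect_block_in_decided_iff[OF y] fitness_reflect_block[OF x] x(2) by auto
  next
    case False
    then show ?thesis using fitness_reflect_block[OF x] fitness_reflect_block[OF y False] by simp
  qed
  then show ?thesis
    by (simp add: lo_fork_eq_fitness[OF x(1)] lo_fork_eq_fitness[OF y] lo_fork_eq_fitness[OF x']
        lo_fork_eq_fitness[OF y'])
qed

lemma stopped_reflect_block:
  assumes x: "length x = n"
  shows "stopped decided ea_kernel (reflect_block x) = map_pmf reflect_block (stopped decided ea_kernel x)"
proof (cases "x \<in> decided")
  case True
  then show ?thesis unfolding stopped_def using reflect_block_in_decided_iff[OF x] by simp
next
  case False
  let ?F = "lo_fork n k r"
  let ?p = "1 / real n"
  have p: "0 \<le> ?p" "?p \<le> 1" using n_ge_2 by auto
  have not_decided: "reflect_block x \<notin> decided" using reflect_block_in_decided_iff[OF x] False by simp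
  then have not_opt: "x \<noteq> replicate n True" "reflect_block x \<noteq> replicate n True"
    using False replicate_True_in_decided by auto
  have "stopped decided ea_kernel (reflect_block x)
      = bind_pmf (mutate ?p x) (\<lambda>y. return_pmf
          (if ?F (reflect_block x) \<le> ?F (reflect_block y) then reflect_block y else reflect_block x))"
    unfolding stopped_def ea_step_not_opt[OF not_opt(2)] mutate_reflect_block[OF x p]
    using not_decided by (simp add: bind_map_pmf)
  also have "\<dots> = bind_pmf (mutate ?p x) (\<lambda>y. return_pmf (reflect_block (if ?F x \<le> ?F y then y else x)))"
  proof (rule bind_pmf_cong[OF refl])
    fix y assume "y \<in> set_pmf (mutate ?p x)"
    then have "length y = n" using set_pmf_mutate[of ?p x] x by auto
    then show "return_pmf (if ?F (reflect_block x) \<le> ?F (reflect_block y) then reflect_block y else reflect_block x)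
        = return_pmf (reflect_block (if ?F x \<le> ?F y then y else x))"
      using lo_fork_reflect_block_le_iff[OF x False] by simp
  qed
  also have "\<dots> = map_pmf reflect_block (stopped decided ea_kernel x)"
    unfolding stopped_def ea_step_not_opt[OF not_opt(1)] using False by (simp add: map_bind_pmf)
  finally show ?thesis .
qed

lemma set_pmf_stopped_chain:
  "set_pmf (markov_iter (stopped decided ea_kernel) s initial) \<subseteq> {x. length x = n}"
proof (rule set_pmf_markov_iter)
  fix x :: "bool list" assume "x \<in> {x. length x = n}"
  then show "set_pmf (stopped decided ea_kernel x) \<subseteq> {x. length x = n}"
    using set_pmf_ea_step[of x n] by (auto simp: stopped_def)
qed (simp add: set_pmf_uniform_lists)

lemma stopped_chain_symmetric:
  "map_pmf reflect_block (markov_iter (stopped decided ea_kernel) s initial)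
    = markov_iter (stopped decided ea_kernel) s initial"
proof (induction s)
  case 0
  have inj: "inj_on reflect_block {x. length x = n}"
    by (rule inj_on_inverseI[where g = reflect_block]) (simp add: reflect_block_simps(4))
  have img: "reflect_block ` {x. length x = n} = {x. length x = n}"
  proof
    show "{x. length x = n} \<subseteq> reflect_block ` {x. length x = n}"
    proof
      fix x :: "bool list" assume "x \<in> {x. length x = n}"
      then show "x \<in> reflect_block ` {x. length x = n}"
        using reflect_block_simps(1,4)[of x] by (intro rev_image_eqI[of "reflect_block x"]) auto
    qed
  qed (use reflect_block_simps(1) in auto)
  have "map_pmf reflect_block initial = pmf_of_set (reflect_block ` {x. length x = n})"
    by (rule map_pmf_of_set_inj[OF inj lists_length_finite_nonempty(2,1)])
  then show ?case using img by simp
next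
  case (Suc s)
  let ?M = "markov_iter (stopped decided ea_kernel) s initial"
  have "map_pmf reflect_block (bind_pmf ?M (stopped decided ea_kernel))
      = bind_pmf ?M (\<lambda>x. stopped decided ea_kernel (reflect_block x))"
    unfolding map_bind_pmf
  proof (rule bind_pmf_cong[OF refl])
    fix x assume "x \<in> set_pmf ?M"
    then have "length x = n" using set_pmf_stopped_chain by auto
    then show "map_pmf reflect_block (stopped decided ea_kernel x) = stopped decided ea_kernel (reflect_block x)"
      by (rule stopped_reflect_block[symmetric])
  qed
  also have "\<dots> = bind_pmf ?M (stopped decided ea_kernel)"
    using Suc by (metis bind_map_pmf)
  finally show ?case by (simp add: markov_iter_Suc)
qed

lemma emeasure_stopped_decided_eq_twice_trapped:
  "emeasure (markov_iter (stopped decided ea_kernel) s initial) decided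
    = 2 * emeasure (markov_iter (stopped decided ea_kernel) s initial) trapped"
proof -
  let ?M = "markov_iter (stopped decided ea_kernel) s initial"
  have "emeasure ?M (decided - trapped) = emeasure (map_pmf reflect_block ?M) (decided - trapped)"
    using stopped_chain_symmetric by simp
  also have "\<dots> = emeasure ?M trapped"
  proof (simp, rule emeasure_eq_AE, rule AE_pmfI)
    fix y assume "y \<in> set_pmf ?M"
    then have "length y = n" using set_pmf_stopped_chain by auto
    then show "y \<in> reflect_block -` (decided - trapped) \<longleftrightarrow> y \<in> trapped"
      using reflect_block_in_decided_diff_trapped_iff by simp
  qed auto
  finally have "emeasure ?M (decided - trapped) = emeasure ?M trapped" .
  moreover have "emeasure ?M decided = emeasure ?M trapped + emeasure ?M (decided - trapped)"
    using trapped_subset_decided by (subst plus_emeasure) (auto simp: Un_absorb1)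
  ultimately show ?thesis by (simp add: mult_2)
qed

lemma prob_trap_to_ones_le:
  assumes "x \<in> trapped"
  shows "measure (mutate (1 / real n) x) {y. block k m y = replicate k True} \<le> (1 / real n) ^ (2 * r)"
proof -
  let ?p = "1 / real n"
  have p: "0 \<le> ?p" "?p \<le> 1" using n_ge_2 by auto
  have "block k m x = trap k r" using assms unfolding trapped_def by auto
  have "measure (mutate ?p x) {y. block k m y = replicate k True}
      = measure (map_pmf (block k m) (mutate ?p x)) {replicate k True}"
    by (simp add: vimage_def)
  also have "\<dots> = pmf (mutate ?p (trap k r)) (replicate k True)"
    by (simp add: map_block_mutate \<open>block k m x = trap k r\<close> measure_pmf_single)
  also have "\<dots> \<le> ?p ^ (2 * r)"
    using p two_r_le_k
    by (simp add: pmf_mutate mutation_prob_hamming hamming_trap mult_left_le power_le_one)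
  finally show ?thesis .
qed

lemma trapped_stay:
  assumes "x \<in> trapped"
  shows "ennreal (1 - (1 / real n) ^ (2 * r)) \<le> emeasure (ea_kernel x) trapped"
proof -
  let ?F = "lo_fork n k r"
  let ?M = "mutate (1 / real n) x"
  let ?B = "{y. block k m y \<noteq> replicate k True}"
  have x: "length x = n" using assms unfolding trapped_def by auto
  have not_opt: "x \<noteq> replicate n True"
    using assms full_blocks_eq_nblocks_iff[OF x] m_less by (auto simp: trapped_def)
  have fitness_x: "m * (k + 2) + k + 1 \<le> fitness n k r x"
    using decided_iff_fitness_ge[OF x] trapped_subset_decided assms by auto
  have "UNIV - {y. block k m y = replicate k True} = ?B" by auto
  then have "1 - (1 / real n) ^ (2 * r) \<le> measure ?M ?B"
    using measure_pmf.prob_compl[of "{y. block k m y = replicate k True}" ?M]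
      prob_trap_to_ones_le[OF assms] by simp
  then have "ennreal (1 - (1 / real n) ^ (2 * r)) \<le> (\<integral>\<^sup>+y. indicator ?B y \<partial>?M)"
    by (simp add: measure_pmf.emeasure_eq_measure ennreal_leI)
  also have "\<dots> \<le> (\<integral>\<^sup>+y. indicator trapped (if ?F x \<le> ?F y then y else x) \<partial>?M)"
  proof (rule nn_integral_mono_AE, rule AE_pmfI)
    fix y assume "y \<in> set_pmf ?M"
    then have y: "length y = n" using set_pmf_mutate[of "1 / real n" x] x by auto
    have "y \<in> trapped" if "y \<in> ?B" "?F x \<le> ?F y"
    proof -
      have "y \<in> decided"
        using that fitness_x decided_iff_fitness_ge[OF y] lo_fork_eq_fitness[OF x] lo_fork_eq_fitness[OF y]
        by simp
      then show ?thesis using that trapped_iff[OF y] by (auto simp: decided_def)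
    qed
    then show "indicator ?B y \<le> (indicator trapped (if ?F x \<le> ?F y then y else x) :: ennreal)"
      using assms by (auto simp: indicator_def)
  qed
  also have "\<dots> = emeasure (ea_kernel x) trapped"
    by (simp add: ea_step_not_opt[OF not_opt])
  finally show ?thesis .
qed

lemma stopped_trapped_ge:
  assumes "1 / 2 \<le> measure (markov_iter ea_kernel s initial) {replicate n True}"
  shows "ennreal (1 / 4) \<le> emeasure (markov_iter (stopped decided ea_kernel) s initial) trapped"
proof -
  have "ennreal (1 / 2) \<le> emeasure (markov_iter ea_kernel s initial) {replicate n True}"
    using assms unfolding measure_pmf.emeasure_eq_measure by (rule ennreal_leI)
  also have "\<dots> \<le> emeasure (markov_iter (stopped decided ea_kernel) s initial) decided"
    by (rule emeasure_absorbing_le_stopped) (simp_all add: replicate_True_in_decided ea_step_opt)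
  also have "\<dots> = 2 * emeasure (markov_iter (stopped decided ea_kernel) s initial) trapped"
    by (rule emeasure_stopped_decided_eq_twice_trapped)
  finally show ?thesis
    using ennreal_mult[of 2 "1 / 4"] ennreal_mult_le_mult_iff[of 2 "ennreal (1 / 4)"] by simp
qed

lemma trapped_occupation_ge:
  assumes T: "(1 - (1 / real n) ^ (2 * r)) ^ T \<le> 1 / 2"
    and s: "1 / 2 \<le> measure (markov_iter ea_kernel s initial) {replicate n True}"
  shows "ennreal (real n ^ (2 * r) / 8) \<le> occupation ea_kernel trapped (T + s) initial"
proof -
  let ?q = "(1 / real n) ^ (2 * r)"
  have q: "0 \<le> ?q" "?q \<le> 1" using n_ge_2 by (auto simp: power_le_one)
  have "real n ^ (2 * r) * ?q = 1"
    using n_ge_2 by (simp add: power_one_over)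
  then have "(\<Sum>t<T. (1 - ?q) ^ t) = real n ^ (2 * r) * (?q * (\<Sum>t<T. (1 - ?q) ^ t))"
    by (simp add: mult.assoc[symmetric])
  also have "?q * (\<Sum>t<T. (1 - ?q) ^ t) = 1 - (1 - ?q) ^ T"
    using one_diff_power_eq[of "1 - ?q" T] by simp
  finally have "(\<Sum>t<T. (1 - ?q) ^ t) = real n ^ (2 * r) * (1 - (1 - ?q) ^ T)" .
  moreover have "real n ^ (2 * r) * (1 / 2) \<le> real n ^ (2 * r) * (1 - (1 - ?q) ^ T)"
    using T by (intro mult_left_mono) auto
  ultimately have G: "real n ^ (2 * r) / 2 \<le> (\<Sum>t<T. (1 - ?q) ^ t)"
    by simp
  have "ennreal (real n ^ (2 * r) / 8) = ennreal (1 / 4) * ennreal (real n ^ (2 * r) / 2)"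
    by (simp add: ennreal_mult[symmetric])
  also have "\<dots> \<le> emeasure (markov_iter (stopped decided ea_kernel) s initial) trapped
      * ennreal (\<Sum>t<T. (1 - ?q) ^ t)"
    by (intro mult_mono stopped_trapped_ge[OF s] ennreal_leI G) auto
  also have "\<dots> \<le> occupation ea_kernel trapped (T + s) initial"
    by (rule occupation_ge_stopped[OF trapped_stay q])
  finally show ?thesis .
qed

end

lemma ennreal_le_suminf_if_bounded_below:
  fixes f :: "nat \<Rightarrow> ennreal"
  assumes "0 < c" "\<And>t. ennreal c \<le> f t"
  shows "ennreal x \<le> (\<Sum>t. f t)"
proof -
  obtain M :: nat where "x / c < real M"
    using reals_Archimedean2 by blast
  then have "x \<le> real M * c" using assms(1) by (simp add: field_simps)
  then have "ennreal x \<le> ennreal (real M * c)" by (rule ennreal_leI)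
  also have "\<dots> = (\<Sum>t<M. ennreal c)"
    using sum_ennreal[of "{..<M}" "\<lambda>_. c"] assms(1) by simp
  also have "\<dots> \<le> (\<Sum>t<M. f t)" by (intro sum_mono assms(2))
  also have "\<dots> \<le> (\<Sum>t. f t)" by (rule sum_le_suminf) auto
  finally show ?thesis .
qed

context lo_fork_setting
begin

lemma lo_fork_block: "m < nblocks \<Longrightarrow> lo_fork_block n k r m"
  by (intro lo_fork_block.intro lo_fork_setting_axioms lo_fork_block_axioms.intro)

lemma occupation_not_optimal_ge:
  assumes s: "1 / 2 \<le> measure (markov_iter ea_kernel s initial) {replicate n True}"
  obtains T where "ennreal (real n ^ (2 * r + 1) / (8 * real k))
    \<le> occupation ea_kernel {x. x \<noteq> replicate n True} (T + s) initial"
proof -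
  have "0 < (1 / real n) ^ (2 * r)" using n_ge_2 by simp
  then obtain T where T: "(1 - (1 / real n) ^ (2 * r)) ^ T \<le> 1 / 2"
    using real_arch_pow_inv[of "1 / 2" "1 - (1 / real n) ^ (2 * r)"] by (auto intro: less_imp_le)
  let ?D = "lo_fork_block.trapped n k r"
  have D: "?D m = {x. length x = n \<and> full_blocks k x = m \<and> block k m x = trap k r}"
    if "m < nblocks" for m
    using lo_fork_block.trapped_def[OF lo_fork_block[OF that]] .
  have eq: "real n ^ (2 * r + 1) / (8 * real k) = real nblocks * (real n ^ (2 * r) / 8)"
    using k_dvd_n k_pos by (simp add: real_of_nat_div field_simps)
  have "ennreal (real n ^ (2 * r + 1) / (8 * real k))
      = ennreal (real nblocks) * ennreal (real n ^ (2 * r) / 8)"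
    unfolding eq by (rule ennreal_mult) auto
  also have "\<dots> = (\<Sum>m<nblocks. ennreal (real n ^ (2 * r) / 8))"
    by (simp add: ennreal_of_nat_eq_real_of_nat)
  also have "\<dots> \<le> (\<Sum>m<nblocks. occupation ea_kernel (?D m) (T + s) initial)"
    by (intro sum_mono lo_fork_block.trapped_occupation_ge[OF lo_fork_block T s]) simp
  also have "\<dots> = occupation ea_kernel (\<Union>m<nblocks. ?D m) (T + s) initial"
    by (rule sum_occupation_disjoint) (auto simp: disjoint_family_on_def D)
  also have "\<dots> \<le> occupation ea_kernel {x. x \<noteq> replicate n True} (T + s) initial"
  proof (rule occupation_mono_set, rule subsetI)
    fix x assume "x \<in> (\<Union>m<nblocks. ?D m)"
    then obtain m where "m < nblocks" "x \<in> ?D m" by blast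
    then have "length x = n" "full_blocks k x \<noteq> nblocks" using D by auto
    then show "x \<in> {x. x \<noteq> replicate n True}" using full_blocks_eq_nblocks_iff by auto
  qed
  finally show ?thesis by (rule that)
qed

lemma ea_expected_time_ge:
  "ennreal (real n ^ (2 * r + 1) / (8 * real k)) \<le> ea_expected_time (lo_fork n k r) n (replicate n True)"
proof (cases "\<exists>s. 1 / 2 \<le> measure (markov_iter ea_kernel s initial) {replicate n True}")
  case True
  then obtain s T where "ennreal (real n ^ (2 * r + 1) / (8 * real k))
      \<le> occupation ea_kernel {x. x \<noteq> replicate n True} (T + s) initial"
    using occupation_not_optimal_ge by metis
  also have "\<dots> \<le> ea_expected_time (lo_fork n k r) n (replicate n True)"
    unfolding ea_expected_time_eq_markov_iter by (rule occupation_le_suminf)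
  finally show ?thesis .
next
  case False
  have "ennreal (1 / 2) \<le> emeasure (markov_iter ea_kernel t initial) {x. x \<noteq> replicate n True}" for t
  proof -
    have "UNIV - {replicate n True} = {x. x \<noteq> replicate n True}" by auto
    then have "measure (markov_iter ea_kernel t initial) {x. x \<noteq> replicate n True}
        = 1 - measure (markov_iter ea_kernel t initial) {replicate n True}"
      using measure_pmf.prob_compl[of "{replicate n True}" "markov_iter ea_kernel t initial"] by simp
    then show ?thesis
      using False unfolding measure_pmf.emeasure_eq_measure
      by (intro ennreal_leI) (simp add: not_le less_imp_le)
  qed
  then show ?thesis
    unfolding ea_expected_time_eq_markov_iter by (rule ennreal_le_suminf_if_bounded_below[rotated]) simp
qed

end

theorem theorem3:
  fixes r :: nat
  assumes "r \<ge> 2"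
  shows "\<exists>c1 c2 :: real. c1 > 0 \<and> c2 > 0 \<and> (\<exists>N. \<forall>n k. n \<ge> N \<longrightarrow> n \<ge> 2 \<longrightarrow> k \<ge> 2 * r \<longrightarrow> k dvd n \<longrightarrow>
     ennreal (c1 * real n ^ (2 * r + 1) / real k)
       \<le> ea_expected_time (lo_fork n k r) n (replicate n True) \<and>
     ea_expected_time (lo_fork n k r) n (replicate n True)
       \<le> ennreal (c2 * real n ^ (2 * r + 1) / real k))"
proof (intro exI conjI allI impI)
  fix n k :: nat
  assume "2 \<le> n" "2 * r \<le> k" "k dvd n"
  then interpret lo_fork_setting n k r
    using assms by unfold_locales auto
  show "ennreal (1 / 8 * real n ^ (2 * r + 1) / real k) \<le> ea_expected_time (lo_fork n k r) n (replicate n True)"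
    using ea_expected_time_ge by simp
  show "ea_expected_time (lo_fork n k r) n (replicate n True) \<le> ennreal (3 * exp 2 * real n ^ (2 * r + 1) / real k)"
    using ea_expected_time_le by simp
qed auto

end
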